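(* For all $n\ge 2$ and $0\le k\le n-2$, $$f(n,k)=\sum_{j=0}^{k}\binom{k-j}{j}(-1)^j\,(n-2-j)!.$$
   Context: A complete non-ambiguous matrix (CNM) of size $n$ is an $n\times n$ matrix $M=(m_{i,j})$ with entries in $\{0,1\}$ whose support $T=\{(i,j): m_{i,j}=1\}$ (whose elements are called vertices) satisfies: (1) $(1,1)\in T$; (2) for every $p=(i,j)\in T$ with $p\neq(1,1)$, exactly one of the following holds: there is $(i',j)\in T$ with $i'<i$, or there is $(i,j')\in T$ with $j'<j$; (3) every row and every column of $M$ contains at least one vertex; (4) define the parent of $p=(i,j)\neq(1,1)$ to be $(i',j)$ with $i'<i$ maximal if such a vertex exists, and otherwise $(i,j')$ with $j'<j$ maximal; then every vertex is the parent of either zero or exactly two vertices. A vertex with no children is a leaf. A CNM of size $n$ is upper-diagonal if its leaves are exactly the positions $(i,n+1-i)$, $1\le i\le n$. For $n\ge 2$ and $0\le k\le n-2$, $f(n,k)$ is the number of upper-diagonal CNMs $M$ of size $n$ with $m_{i,n-i}=0$ for $1\le i\le k$ and $m_{k+1,n-k-1}=1$. Binomial coefficients $\binom{a}{b}$ with $b>a\ge 0$ are $0$. *)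

theory Defs
  imports Main
begin

text \<open>A 0/1 matrix of size n is identified with its support
  T \<subseteq> {1..n} \<times> {1..n} (1-based positions (row, column)).\<close>

definition cnm_parent :: "(nat \<times> nat) set \<Rightarrow> nat \<times> nat \<Rightarrow> nat \<times> nat" where
  "cnm_parent T p =
     (if (\<exists>i'<fst p. (i', snd p) \<in> T)
      then (Max {i'. i' < fst p \<and> (i', snd p) \<in> T}, snd p)
      else (fst p, Max {j'. j' < snd p \<and> (fst p, j') \<in> T}))"

definition cnm_children :: "(nat \<times> nat) set \<Rightarrow> nat \<times> nat \<Rightarrow> (nat \<times> nat) set" where
  "cnm_children T p = {q \<in> T. q \<noteq> (1,1) \<and> cnm_parent T q = p}"

definition is_CNM :: "nat \<Rightarrow> (nat \<times> nat) set \<Rightarrow> bool" where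
  "is_CNM n T \<longleftrightarrow>
     T \<subseteq> {1..n} \<times> {1..n} \<and>
     (1,1) \<in> T \<and>
     (\<forall>(i,j)\<in>T. (i,j) \<noteq> (1,1) \<longrightarrow>
        ((\<exists>i'<i. (i',j) \<in> T) \<noteq> (\<exists>j'<j. (i,j') \<in> T))) \<and>
     (\<forall>i\<in>{1..n}. \<exists>j. (i,j) \<in> T) \<and>
     (\<forall>j\<in>{1..n}. \<exists>i. (i,j) \<in> T) \<and>
     (\<forall>p\<in>T. card (cnm_children T p) = 0 \<or> card (cnm_children T p) = 2)"

definition cnm_leaves :: "(nat \<times> nat) set \<Rightarrow> (nat \<times> nat) set" where
  "cnm_leaves T = {p \<in> T. cnm_children T p = {}}"

definition upper_diagonal :: "nat \<Rightarrow> (nat \<times> nat) set \<Rightarrow> bool" where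
  "upper_diagonal n T \<longleftrightarrow> cnm_leaves T = {(i, n + 1 - i) | i. 1 \<le> i \<and> i \<le> n}"

definition f_cnm :: "nat \<Rightarrow> nat \<Rightarrow> nat" where
  "f_cnm n k = card {T. is_CNM n T \<and> upper_diagonal n T \<and>
      (\<forall>i\<in>{1..k}. (i, n - i) \<notin> T) \<and> (k + 1, n - k - 1) \<in> T}"

end

theory Submission
  imports Defs
begin

text \<open>Reversing the column order of an upper-diagonal CNM of size \<open>n\<close> turns its vertices into
  the pairs (leftmost leaf, rightmost leaf) of all subtrees of a binary tree with leaves
  \<open>1, \<dots>, n\<close> in which the left subtree of every node has both the smaller leftmost and the
  smaller rightmost leaf, and the tree is determined by these pairs. There are \<open>(n - 1)!\<close> such
  trees, and the entry at \<open>(i, n - i)\<close> is \<open>1\<close> exactly when the leaves \<open>i\<close> and \<open>i + 1\<close> form a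
  cherry. Contracting the cherry \<open>(k + 1, k + 2)\<close> maps the trees whose first cherry is at
  \<open>k + 1\<close> bijectively onto the trees on \<open>n - 1\<close> leaves without a cherry among \<open>1, \<dots>, k - 1\<close>.
  Hence their number \<open>g n k\<close> satisfies \<open>g n k = (n - 2)! - (\<Sum>s < k - 1. g (n - 1) s)\<close>, which
  is also the recurrence satisfied by the alternating binomial sum.\<close>

section \<open>Binary trees with interval-ordered leaves\<close>

datatype ltree = Leaf nat | Node ltree ltree

fun leaves :: "ltree \<Rightarrow> nat set" where
  "leaves (Leaf x) = {x}"
| "leaves (Node l r) = leaves l \<union> leaves r"

fun leftmost :: "ltree \<Rightarrow> nat" where
  "leftmost (Leaf x) = x"
| "leftmost (Node l r) = leftmost l"

fun rightmost :: "ltree \<Rightarrow> nat" where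
  "rightmost (Leaf x) = x"
| "rightmost (Node l r) = rightmost r"

fun spans :: "ltree \<Rightarrow> (nat \<times> nat) set" where
  "spans (Leaf x) = {(x, x)}"
| "spans (Node l r) = insert (leftmost l, rightmost r) (spans l \<union> spans r)"

fun wf_tree :: "ltree \<Rightarrow> bool" where
  "wf_tree (Leaf x) = True"
| "wf_tree (Node l r) \<longleftrightarrow> wf_tree l \<and> wf_tree r \<and> leaves l \<inter> leaves r = {} \<and>
     leftmost l < leftmost r \<and> rightmost l < rightmost r"

lemma finite_leaves [simp]: "finite (leaves t)"
  by (induction t) auto

lemma leaves_nonempty [simp]: "leaves t \<noteq> {}"
  by (induction t) auto

lemma leftmost_in_leaves: "leftmost t \<in> leaves t"
  by (induction t) auto

lemma rightmost_in_leaves: "rightmost t \<in> leaves t"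
  by (induction t) auto

lemma leftmost_eq_Min: "wf_tree t \<Longrightarrow> leftmost t = Min (leaves t)"
  by (induction t) (auto simp: Min_Un)

lemma rightmost_eq_Max: "wf_tree t \<Longrightarrow> rightmost t = Max (leaves t)"
  by (induction t) (auto simp: Max_Un)

lemma spans_subset_leaves: "spans t \<subseteq> leaves t \<times> leaves t"
  by (induction t) (use leftmost_in_leaves rightmost_in_leaves in auto)

lemma wf_tree_singleton_leaves: "wf_tree t \<Longrightarrow> leaves t = {x} \<Longrightarrow> t = Leaf x"
  by (cases t) (auto simp: Un_singleton_iff)

text \<open>Spans act as the edges of a connected graph on the leaves.\<close>

lemma spans_separate:
  assumes "wf_tree t" "X \<subseteq> leaves t" "X \<noteq> {}" "X \<noteq> leaves t"
  shows "\<exists>p\<in>spans t. (fst p \<in> X) \<noteq> (snd p \<in> X)"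
  using assms
proof (induction t arbitrary: X)
  case (Leaf x)
  then show ?case by auto
next
  case (Node l r)
  have disj: "leaves l \<inter> leaves r = {}"
    using Node.prems by simp
  have from_subtree: "\<exists>p\<in>spans (Node l r). (fst p \<in> X) \<noteq> (snd p \<in> X)"
    if s: "s \<in> {l, r}"
      and sep: "\<exists>p\<in>spans s. (fst p \<in> X \<inter> leaves s) \<noteq> (snd p \<in> X \<inter> leaves s)" for s
  proof -
    obtain p where "p \<in> spans s" "(fst p \<in> X \<inter> leaves s) \<noteq> (snd p \<in> X \<inter> leaves s)"
      using sep by blast
    moreover have "fst p \<in> leaves s" "snd p \<in> leaves s"
      using spans_subset_leaves \<open>p \<in> spans s\<close> by force+
    ultimately show ?thesis
      using s by (intro bexI[of _ p]) auto
  qed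
  show ?case
  proof (cases "X \<inter> leaves l \<noteq> {} \<and> X \<inter> leaves l \<noteq> leaves l")
    case True
    then show ?thesis
      using Node.IH(1)[of "X \<inter> leaves l"] Node.prems by (intro from_subtree[of l]) auto
  next
    case left_trivial: False
    show ?thesis
    proof (cases "X \<inter> leaves r \<noteq> {} \<and> X \<inter> leaves r \<noteq> leaves r")
      case True
      then show ?thesis
        using Node.IH(2)[of "X \<inter> leaves r"] Node.prems by (intro from_subtree[of r]) auto
    next
      case False
      then have "X = leaves l \<or> X = leaves r"
        using left_trivial Node.prems disj by auto
      then have "(leftmost l \<in> X) \<noteq> (rightmost r \<in> X)"
        using leftmost_in_leaves[of l] rightmost_in_leaves[of r] disj by auto
      then show ?thesis
        by (intro bexI[of _ "(leftmost l, rightmost r)"]) auto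
    qed
  qed
qed

lemma spans_Un_restrict:
  assumes "leaves l \<inter> leaves r = {}"
  shows "(spans l \<union> spans r) \<inter> (leaves l \<times> leaves l) = spans l"
  using spans_subset_leaves[of l] spans_subset_leaves[of r] assms by blast

lemma leaves_subset_block:
  assumes "wf_tree a" and "spans a \<subseteq> spans a' \<union> spans b'" and "leaves a' \<inter> leaves b' = {}"
    and "leaves a \<subseteq> leaves a' \<union> leaves b'" and "leaves a \<inter> leaves a' \<noteq> {}"
  shows "leaves a \<subseteq> leaves a'"
proof (rule ccontr)
  assume "\<not> leaves a \<subseteq> leaves a'"
  then obtain p where p: "p \<in> spans a"
    "(fst p \<in> leaves a \<inter> leaves a') \<noteq> (snd p \<in> leaves a \<inter> leaves a')"
    using spans_separate[OF assms(1), of "leaves a \<inter> leaves a'"] assms(5) by blast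
  have "fst p \<in> leaves a" "snd p \<in> leaves a"
    using p(1) spans_subset_leaves by force+
  moreover have "p \<in> spans a' \<union> spans b'"
    using assms(2) p(1) by blast
  ultimately show False
    using p(2) spans_subset_leaves[of a'] spans_subset_leaves[of b'] assms(3) by (cases p) auto
qed

lemma root_span_notin:
  "leaves l \<inter> leaves r = {} \<Longrightarrow> (leftmost l, rightmost r) \<notin> spans l \<union> spans r"
  using spans_subset_leaves[of l] spans_subset_leaves[of r] leftmost_in_leaves[of l]
    rightmost_in_leaves[of r] by blast

lemma Node_spans_eq_subtrees:
  assumes wf: "wf_tree (Node l r)" "wf_tree (Node l' r')"
    and leaves_eq: "leaves (Node l r) = leaves (Node l' r')"
    and spans_eq: "spans (Node l r) = spans (Node l' r')"
  shows "leaves l = leaves l' \<and> spans l = spans l' \<and> leaves r = leaves r' \<and> spans r = spans r'"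
proof -
  have disj: "leaves l \<inter> leaves r = {}" "leaves l' \<inter> leaves r' = {}"
    using wf by auto
  have "leftmost (Node l r) = leftmost (Node l' r')" "rightmost (Node l r) = rightmost (Node l' r')"
    using leftmost_eq_Min rightmost_eq_Max wf leaves_eq by metis+
  then have root: "(leftmost l, rightmost r) = (leftmost l', rightmost r')"
    by simp
  have "spans l \<union> spans r = spans (Node l r) - {(leftmost l, rightmost r)}"
    using root_span_notin[OF disj(1)] by auto
  also have "\<dots> = spans l' \<union> spans r'"
    using spans_eq root root_span_notin[OF disj(2)] by auto
  finally have spans_Un: "spans l \<union> spans r = spans l' \<union> spans r'" .
  have common: "leftmost l \<in> leaves l \<inter> leaves l'"
    using root leftmost_in_leaves by (metis IntI Pair_inject)
  have "leaves l \<subseteq> leaves l'"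
    by (rule leaves_subset_block[of l l' r']) (use wf spans_Un disj leaves_eq common in auto)
  moreover have "leaves l' \<subseteq> leaves l"
    by (rule leaves_subset_block[of l' l r]) (use wf spans_Un disj leaves_eq common in auto)
  ultimately have leaves_l: "leaves l = leaves l'" ..
  then have leaves_r: "leaves r = leaves r'"
    using leaves_eq disj by auto
  have "spans l = (spans l \<union> spans r) \<inter> (leaves l \<times> leaves l)"
    by (rule spans_Un_restrict[OF disj(1), symmetric])
  also have "\<dots> = spans l'"
    unfolding spans_Un leaves_l by (rule spans_Un_restrict[OF disj(2)])
  finally have spans_l: "spans l = spans l'" .
  have "spans r = (spans r \<union> spans l) \<inter> (leaves r \<times> leaves r)"
    by (rule spans_Un_restrict[symmetric]) (use disj in blast)
  also have "\<dots> = spans r'"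
    unfolding Un_commute[of "spans r"] spans_Un leaves_r Un_commute[of "spans l'"]
    by (rule spans_Un_restrict) (use disj in blast)
  finally show ?thesis
    using leaves_l leaves_r spans_l by simp
qed

lemma wf_tree_spans_inj:
  assumes "wf_tree t" "wf_tree u" "leaves t = leaves u" "spans t = spans u"
  shows "t = u"
  using assms
proof (induction t arbitrary: u)
  case (Leaf x)
  then show ?case
    using wf_tree_singleton_leaves[of u x] by simp
next
  case (Node l r)
  obtain l' r' where u: "u = Node l' r'"
  proof (cases u)
    case (Leaf y)
    then show ?thesis
      using Node.prems wf_tree_singleton_leaves[of "Node l r" y] by simp
  qed
  then show ?case
    using Node_spans_eq_subtrees[of l r l' r'] Node.prems Node.IH by auto
qed

section \<open>Counting trees\<close>

lemma Min_Un_in_left_iff: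
  fixes A B :: "'a::linorder set"
  assumes "finite A" "A \<noteq> {}" "finite B" "B \<noteq> {}" "A \<inter> B = {}"
  shows "Min (A \<union> B) \<in> A \<longleftrightarrow> Min A < Min B"
proof -
  have in_AB: "Min A \<in> A" "Min B \<in> B"
    using assms by simp_all
  have Min_AB: "Min (A \<union> B) = min (Min A) (Min B)"
    by (rule Min_Un[OF assms(1-4)])
  consider "Min A < Min B" | "Min B < Min A"
    using in_AB assms(5) by (metis disjoint_iff linorder_neqE)
  then show ?thesis
  proof cases
    case 1
    then show ?thesis
      using in_AB by (simp add: Min_AB)
  next
    case 2
    then have "Min (A \<union> B) = Min B"
      by (simp add: Min_AB)
    then show ?thesis
      using in_AB assms(5) 2 by auto
  qed
qed

lemma Max_Un_in_right_iff:
  fixes A B :: "'a::linorder set"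
  assumes "finite A" "A \<noteq> {}" "finite B" "B \<noteq> {}" "A \<inter> B = {}"
  shows "Max (A \<union> B) \<in> B \<longleftrightarrow> Max A < Max B"
proof -
  have in_AB: "Max A \<in> A" "Max B \<in> B"
    using assms by simp_all
  have Max_AB: "Max (A \<union> B) = max (Max A) (Max B)"
    by (rule Max_Un[OF assms(1-4)])
  consider "Max A < Max B" | "Max B < Max A"
    using in_AB assms(5) by (metis disjoint_iff linorder_neqE)
  then show ?thesis
  proof cases
    case 1
    then show ?thesis
      using in_AB by (simp add: Max_AB)
  next
    case 2
    then have "Max (A \<union> B) = Max A"
      by (simp add: Max_AB)
    then show ?thesis
      using in_AB assms(5) 2 by auto
  qed
qed

lemma wf_tree_Node_iff:
  "wf_tree (Node l r) \<longleftrightarrow> wf_tree l \<and> wf_tree r \<and> leaves l \<inter> leaves r = {} \<and>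
     Min (leaves l \<union> leaves r) \<in> leaves l \<and> Max (leaves l \<union> leaves r) \<in> leaves r"
  using Min_Un_in_left_iff[of "leaves l" "leaves r"] Max_Un_in_right_iff[of "leaves l" "leaves r"]
  by (auto simp: leftmost_eq_Min rightmost_eq_Max)

definition trees_on :: "nat set \<Rightarrow> ltree set" where
  "trees_on L = {t. wf_tree t \<and> leaves t = L}"

lemma trees_on_singleton: "trees_on {x} = {Leaf x}"
  using wf_tree_singleton_leaves unfolding trees_on_def by auto

lemma trees_on_split:
  assumes "finite L" "2 \<le> card L"
  defines "S \<equiv> {A. A \<subseteq> L \<and> Min L \<in> A \<and> Max L \<notin> A}"
  shows "trees_on L = (\<lambda>(A, l, r). Node l r) ` (SIGMA A:S. trees_on A \<times> trees_on (L - A))"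
    and "inj_on (\<lambda>(A, l, r). Node l r) (SIGMA A:S. trees_on A \<times> trees_on (L - A))"
proof -
  have "Max L \<in> L"
    using assms(1,2) by (intro Max_in) auto
  show "inj_on (\<lambda>(A, l, r). Node l r) (SIGMA A:S. trees_on A \<times> trees_on (L - A))"
    by (auto simp: inj_on_def trees_on_def)
  show "trees_on L = (\<lambda>(A, l, r). Node l r) ` (SIGMA A:S. trees_on A \<times> trees_on (L - A))"
  proof (intro set_eqI iffI)
    fix t assume t: "t \<in> trees_on L"
    then obtain l r where "t = Node l r"
      using assms(2) by (cases t) (auto simp: trees_on_def)
    then show "t \<in> (\<lambda>(A, l, r). Node l r) ` (SIGMA A:S. trees_on A \<times> trees_on (L - A))"
      using t by (auto simp: trees_on_def S_def wf_tree_Node_iff simp del: wf_tree.simps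
          intro!: image_eqI[of _ _ "(leaves l, l, r)"])
  next
    fix t assume "t \<in> (\<lambda>(A, l, r). Node l r) ` (SIGMA A:S. trees_on A \<times> trees_on (L - A))"
    then obtain A l r where "t = Node l r" "A \<in> S" "l \<in> trees_on A" "r \<in> trees_on (L - A)"
      by auto
    then show "t \<in> trees_on L"
      using \<open>Max L \<in> L\<close>
      by (auto simp: trees_on_def S_def wf_tree_Node_iff Un_absorb1 simp del: wf_tree.simps)
  qed
qed

lemma sum_fact_card_Pow:
  assumes "finite N"
  shows "(\<Sum>A\<in>Pow N. fact (card A) * fact (card N - card A) :: nat) = fact (card N + 1)"
proof -
  let ?n = "card N"
  have "(\<Sum>A\<in>Pow N. fact (card A) * fact (?n - card A) :: nat)
      = (\<Sum>k\<in>{0..?n}. \<Sum>A\<in>{A. A \<in> Pow N \<and> card A = k}. fact (card A) * fact (?n - card A))"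
    by (rule sum.group[symmetric]) (use assms card_mono in auto)
  also have "\<dots> = (\<Sum>k\<in>{0..?n}. fact ?n)"
  proof (rule sum.cong[OF refl])
    fix k assume k: "k \<in> {0..?n}"
    have "(\<Sum>A\<in>{A. A \<in> Pow N \<and> card A = k}. fact (card A) * fact (?n - card A) :: nat)
        = card {A. A \<subseteq> N \<and> card A = k} * (fact k * fact (?n - k))"
      by simp
    also have "\<dots> = fact ?n"
      using n_subsets[OF assms] binomial_fact_lemma[of k ?n] k by (simp add: mult_ac)
    finally show "(\<Sum>A\<in>{A. A \<in> Pow N \<and> card A = k}. fact (card A) * fact (?n - card A))
        = (fact ?n :: nat)" .
  qed
  also have "\<dots> = fact (?n + 1)"
    by simp
  finally show ?thesis .
qed

lemma sum_fact_separating_subsets: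
  assumes "finite L" "m \<in> L" "M \<in> L" "m \<noteq> M"
  shows "(\<Sum>A\<in>{A. A \<subseteq> L \<and> m \<in> A \<and> M \<notin> A}. fact (card A - 1) * fact (card (L - A) - 1))
    = (fact (card L - 1) :: nat)"
proof -
  have "(\<Sum>A\<in>{A. A \<subseteq> L \<and> m \<in> A \<and> M \<notin> A}. fact (card A - 1) * fact (card (L - A) - 1))
      = (\<Sum>B\<in>Pow (L - {m, M}). fact (card B) * fact (card (L - {m, M}) - card B) :: nat)"
  proof (rule sum.reindex_cong)
    show "inj_on (insert m) (Pow (L - {m, M}))"
      by (auto simp: inj_on_def)
    show "{A. A \<subseteq> L \<and> m \<in> A \<and> M \<notin> A} = insert m ` Pow (L - {m, M})"
    proof (intro set_eqI iffI)
      fix A assume "A \<in> {A. A \<subseteq> L \<and> m \<in> A \<and> M \<notin> A}"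
      then show "A \<in> insert m ` Pow (L - {m, M})"
        by (intro image_eqI[of _ _ "A - {m}"]) auto
    qed (use assms in auto)
    fix B assume B: "B \<in> Pow (L - {m, M})"
    then have "finite B" "m \<notin> B"
      using assms(1) finite_subset by blast+
    then have "card (insert m B) = card B + 1"
      by simp
    moreover have "L - insert m B = insert M ((L - {m, M}) - B)"
      using B assms by auto
    then have "card (L - insert m B) = card (L - {m, M}) - card B + 1"
      using B \<open>finite B\<close> assms(1) by (simp add: card_Diff_subset)
    ultimately show "fact (card (insert m B) - 1) * fact (card (L - insert m B) - 1)
        = fact (card B) * fact (card (L - {m, M}) - card B)"
      by simp
  qed
  also have "\<dots> = fact (card (L - {m, M}) + 1)"
    using assms(1) by (simp add: sum_fact_card_Pow)
  also have "\<dots> = fact (card L - 1)"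
  proof -
    have "card {m, M} \<le> card L"
      using assms by (intro card_mono) auto
    moreover have "card (L - {m, M}) = card L - card {m, M}"
      using assms by (intro card_Diff_subset) auto
    ultimately show ?thesis
      using assms(4) by (simp add: Suc_diff_Suc)
  qed
  finally show ?thesis .
qed

lemma Min_less_Max:
  assumes "finite L" "2 \<le> card L"
  shows "Min L < Max L"
proof -
  have "L \<noteq> {}"
    using assms(2) by auto
  moreover have "Min L \<noteq> Max L"
  proof
    assume "Min L = Max L"
    then have "L \<subseteq> {Min L}"
      using Min_le[OF assms(1)] Max_ge[OF assms(1)] by (metis antisym singletonI subsetI)
    then show False
      using assms(2) card_mono[of "{Min L}" L] by simp
  qed
  ultimately show ?thesis
    using assms(1) by (simp add: order.not_eq_order_implies_strict)
qed

lemma card_trees_on: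
  assumes "finite L" "L \<noteq> {}"
  shows "card (trees_on L) = fact (card L - 1)"
  using assms
proof (induction "card L" arbitrary: L rule: less_induct)
  case less
  show ?case
  proof (cases "card L = 1")
    case True
    then show ?thesis
      by (auto simp: card_1_singleton_iff trees_on_singleton)
  next
    case False
    then have two: "2 \<le> card L"
      using less.prems by (metis One_nat_def card_0_eq less_2_cases not_less)
    define S where "S = {A. A \<subseteq> L \<and> Min L \<in> A \<and> Max L \<notin> A}"
    have Min_Max: "Min L \<in> L" "Max L \<in> L" "Min L \<noteq> Max L"
      using less.prems Min_less_Max[OF less.prems(1) two] by auto
    have card_parts: "card (trees_on A) * card (trees_on (L - A))
        = fact (card A - 1) * fact (card (L - A) - 1)" if "A \<in> S" for A
    proof -
      have "A \<subset> L" "L - A \<subset> L" "A \<noteq> {}" "L - A \<noteq> {}"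
        using that Min_Max by (auto simp: S_def)
      moreover have "finite A"
        using \<open>A \<subset> L\<close> less.prems(1) finite_subset by blast
      ultimately show ?thesis
        using less.hyps[of A] less.hyps[of "L - A"] less.prems by (simp add: psubset_card_mono)
    qed
    have "finite S"
      using less.prems(1) by (simp add: S_def)
    moreover have "finite (trees_on A \<times> trees_on (L - A))" if "A \<in> S" for A
      using card_parts[OF that] by (metis card_cartesian_product card.infinite fact_nonzero mult_is_0)
    moreover have "card (trees_on L) = card (SIGMA A:S. trees_on A \<times> trees_on (L - A))"
      using trees_on_split[OF less.prems(1) two] by (simp add: card_image S_def)
    ultimately have "card (trees_on L) = (\<Sum>A\<in>S. fact (card A - 1) * fact (card (L - A) - 1))"
      using card_parts by (simp add: card_cartesian_product)
    then show ?thesis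
      using sum_fact_separating_subsets[OF less.prems(1) Min_Max] by (simp add: S_def)
  qed
qed

lemma finite_trees_on: "finite L \<Longrightarrow> L \<noteq> {} \<Longrightarrow> finite (trees_on L)"
  using card_trees_on by (metis card.infinite fact_nonzero)

section \<open>Cherries\<close>

fun subtrees :: "ltree \<Rightarrow> ltree set" where
  "subtrees (Leaf x) = {Leaf x}"
| "subtrees (Node l r) = insert (Node l r) (subtrees l \<union> subtrees r)"

definition has_cherry :: "nat \<Rightarrow> ltree \<Rightarrow> bool" where
  "has_cherry i t \<longleftrightarrow> Node (Leaf i) (Leaf (Suc i)) \<in> subtrees t"

lemma spans_eq_image_subtrees: "spans t = (\<lambda>s. (leftmost s, rightmost s)) ` subtrees t"
  by (induction t) auto

lemma wf_tree_subtrees: "wf_tree t \<Longrightarrow> s \<in> subtrees t \<Longrightarrow> wf_tree s"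
  by (induction t) auto

lemma has_cherry_leaves: "has_cherry c t \<Longrightarrow> c \<in> leaves t \<and> Suc c \<in> leaves t"
  unfolding has_cherry_def by (induction t) auto

lemma span_Suc_iff_has_cherry:
  assumes "wf_tree t"
  shows "(i, Suc i) \<in> spans t \<longleftrightarrow> has_cherry i t"
proof
  assume "(i, Suc i) \<in> spans t"
  then obtain s where s: "s \<in> subtrees t" "leftmost s = i" "rightmost s = Suc i"
    unfolding spans_eq_image_subtrees by auto
  have wf_s: "wf_tree s"
    using wf_tree_subtrees[OF assms s(1)] .
  show "has_cherry i t"
  proof (cases s)
    case (Leaf x)
    then show ?thesis using s by simp
  next
    case (Node l r)
    have "leaves s \<subseteq> {i, Suc i}"
    proof
      fix x assume "x \<in> leaves s"
      then have "Min (leaves s) \<le> x" "x \<le> Max (leaves s)"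
        by simp_all
      then have "i \<le> x" "x \<le> Suc i"
        using s leftmost_eq_Min[OF wf_s] rightmost_eq_Max[OF wf_s] by simp_all
      then show "x \<in> {i, Suc i}" by auto
    qed
    moreover have "leaves l \<inter> leaves r = {}" "leftmost l = i" "rightmost r = Suc i"
      using wf_s Node s by auto
    ultimately have "leaves l = {i}" "leaves r = {Suc i}"
      using Node leftmost_in_leaves[of l] rightmost_in_leaves[of r] by auto
    then have "l = Leaf i" "r = Leaf (Suc i)"
      using wf_tree_singleton_leaves wf_s Node by auto
    then show ?thesis
      using s Node unfolding has_cherry_def by simp
  qed
next
  assume "has_cherry i t"
  then show "(i, Suc i) \<in> spans t"
    unfolding has_cherry_def spans_eq_image_subtrees by force
qed

fun grow_cherry :: "nat \<Rightarrow> ltree \<Rightarrow> ltree" where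
  "grow_cherry c (Leaf x) = (if x = c then Node (Leaf c) (Leaf (Suc c)) else Leaf x)"
| "grow_cherry c (Node l r) = Node (grow_cherry c l) (grow_cherry c r)"

fun contract_cherry :: "nat \<Rightarrow> ltree \<Rightarrow> ltree" where
  "contract_cherry c (Leaf x) = Leaf x"
| "contract_cherry c (Node l r) =
     (if l = Leaf c \<and> r = Leaf (Suc c) then Leaf c
      else Node (contract_cherry c l) (contract_cherry c r))"

lemma grow_cherry_eq_Leaf_iff: "grow_cherry c t = Leaf y \<longleftrightarrow> t = Leaf y \<and> y \<noteq> c"
  by (cases t) auto

lemma Leaf_eq_grow_cherry_iff: "Leaf y = grow_cherry c t \<longleftrightarrow> t = Leaf y \<and> y \<noteq> c"
  by (cases t) auto

lemma leaves_grow_cherry: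
  "leaves (grow_cherry c t) = leaves t \<union> (if c \<in> leaves t then {Suc c} else {})"
  by (induction t) auto

lemma leftmost_grow_cherry: "leftmost (grow_cherry c t) = leftmost t"
  by (induction t) auto

lemma rightmost_grow_cherry:
  "rightmost (grow_cherry c t) = (if rightmost t = c then Suc c else rightmost t)"
  by (induction t) auto

lemma grow_cherry_id: "c \<notin> leaves t \<Longrightarrow> grow_cherry c t = t"
  by (induction t) auto

lemma contract_cherry_id: "c \<notin> leaves t \<Longrightarrow> contract_cherry c t = t"
  by (induction t) auto

lemma wf_tree_grow_cherry: "wf_tree t \<Longrightarrow> Suc c \<notin> leaves t \<Longrightarrow> wf_tree (grow_cherry c t)"
proof (induction t)
  case (Leaf x)
  then show ?case by simp
next
  case (Node l r)
  have "rightmost r \<noteq> Suc c"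
    using Node.prems rightmost_in_leaves[of r] by auto
  then show ?case
    using Node by (auto simp: leaves_grow_cherry leftmost_grow_cherry rightmost_grow_cherry)
qed

lemma has_cherry_grow_cherry:
  "has_cherry i (grow_cherry c t) \<longleftrightarrow>
     (i = c \<and> c \<in> leaves t) \<or> (i \<noteq> c \<and> Suc i \<noteq> c \<and> has_cherry i t)"
  unfolding has_cherry_def
  by (induction t) (auto simp: grow_cherry_eq_Leaf_iff Leaf_eq_grow_cherry_iff)

lemma contract_grow_cherry: "Suc c \<notin> leaves t \<Longrightarrow> contract_cherry c (grow_cherry c t) = t"
proof (induction t)
  case (Leaf x)
  then show ?case by simp
next
  case (Node l r)
  have "grow_cherry c r \<noteq> Leaf (Suc c)"
    using Node.prems by (auto simp: grow_cherry_eq_Leaf_iff)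
  then show ?case
    using Node by auto
qed

lemma grow_contract_cherry:
  "wf_tree t \<Longrightarrow> has_cherry c t \<Longrightarrow> grow_cherry c (contract_cherry c t) = t"
proof (induction t)
  case (Leaf x)
  then show ?case by (simp add: has_cherry_def)
next
  case (Node l r)
  show ?case
  proof (cases "l = Leaf c \<and> r = Leaf (Suc c)")
    case False
    have wf: "leaves l \<inter> leaves r = {}" "wf_tree l" "wf_tree r"
      using Node.prems by auto
    have "has_cherry c l \<or> has_cherry c r"
      using Node.prems False unfolding has_cherry_def by auto
    then show ?thesis
    proof
      assume cherry: "has_cherry c l"
      then have "c \<notin> leaves r"
        using has_cherry_leaves wf(1) by blast
      then show ?thesis
        using Node.IH(1)[OF wf(2) cherry] False by (simp add: contract_cherry_id grow_cherry_id)
    next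
      assume cherry: "has_cherry c r"
      then have "c \<notin> leaves l"
        using has_cherry_leaves wf(1) by blast
      then show ?thesis
        using Node.IH(2)[OF wf(3) cherry] False by (simp add: contract_cherry_id grow_cherry_id)
    qed
  qed simp
qed

lemma wf_tree_contract_cherry:
  "wf_tree t \<Longrightarrow> has_cherry c t \<Longrightarrow>
     wf_tree (contract_cherry c t) \<and> leaves (contract_cherry c t) = leaves t - {Suc c} \<and>
     leftmost (contract_cherry c t) = leftmost t \<and>
     rightmost (contract_cherry c t) = (if rightmost t = Suc c then c else rightmost t)"
proof (induction t)
  case (Leaf x)
  then show ?case by (simp add: has_cherry_def)
next
  case (Node l r)
  show ?case
  proof (cases "l = Leaf c \<and> r = Leaf (Suc c)")
    case False
    have wf: "leaves l \<inter> leaves r = {}" "wf_tree l" "wf_tree r"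
      "leftmost l < leftmost r" "rightmost l < rightmost r"
      using Node.prems by auto
    have "has_cherry c l \<or> has_cherry c r"
      using Node.prems False unfolding has_cherry_def by auto
    then show ?thesis
    proof
      assume "has_cherry c l"
      moreover from this have "c \<notin> leaves r" "Suc c \<notin> leaves r"
        using has_cherry_leaves wf(1) by blast+
      moreover from this have "rightmost r \<noteq> Suc c"
        using rightmost_in_leaves[of r] by auto
      ultimately show ?thesis
        using Node.IH(1) False wf by (auto simp: contract_cherry_id)
    next
      assume "has_cherry c r"
      moreover from this have "c \<notin> leaves l" "Suc c \<notin> leaves l"
        using has_cherry_leaves wf(1) by blast+
      moreover from this have "rightmost l \<noteq> c"
        using rightmost_in_leaves[of l] by auto
      ultimately show ?thesis
        using Node.IH(2) False wf by (auto simp: contract_cherry_id)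
    qed
  qed auto
qed

definition trees_avoiding :: "nat set \<Rightarrow> nat \<Rightarrow> ltree set" where
  "trees_avoiding L k = {t \<in> trees_on L. \<forall>i\<in>{1..k}. \<not> has_cherry i t}"

definition trees_first_cherry :: "nat set \<Rightarrow> nat \<Rightarrow> ltree set" where
  "trees_first_cherry L k = {t \<in> trees_avoiding L k. has_cherry (Suc k) t}"

lemma trees_avoiding_0: "trees_avoiding L 0 = trees_on L"
  unfolding trees_avoiding_def by auto

lemma trees_avoiding_Suc: "trees_avoiding L (Suc k) = trees_avoiding L k - trees_first_cherry L k"
proof -
  have "{1..Suc k} = insert (Suc k) {1..k}"
    by auto
  then show ?thesis
    unfolding trees_avoiding_def trees_first_cherry_def by auto
qed

text \<open>Contracting the cherry \<open>(k + 1, k + 2)\<close> can only create a cherry at \<open>k\<close>, which is why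
  the contracted tree is constrained only up to \<open>k - 1\<close> (for \<open>k = 0\<close> this is \<open>0\<close>, no constraint).\<close>

lemma trees_first_cherry_eq_image:
  assumes "Suc k \<in> L" "Suc (Suc k) \<in> L"
  shows "trees_first_cherry L k =
    grow_cherry (Suc k) ` trees_avoiding (L - {Suc (Suc k)}) (k - 1)"
proof (intro set_eqI iffI)
  fix t assume "t \<in> trees_first_cherry L k"
  then have t: "wf_tree t" "leaves t = L" "has_cherry (Suc k) t" "\<forall>i\<in>{1..k}. \<not> has_cherry i t"
    unfolding trees_first_cherry_def trees_avoiding_def trees_on_def by auto
  have grow: "grow_cherry (Suc k) (contract_cherry (Suc k) t) = t"
    using grow_contract_cherry[OF t(1,3)] .
  have "\<not> has_cherry i (contract_cherry (Suc k) t)" if "i \<in> {1..k - 1}" for i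
    using has_cherry_grow_cherry[of i "Suc k" "contract_cherry (Suc k) t"] grow t(4) that by auto
  then have "contract_cherry (Suc k) t \<in> trees_avoiding (L - {Suc (Suc k)}) (k - 1)"
    using wf_tree_contract_cherry[OF t(1,3)] t(2) unfolding trees_avoiding_def trees_on_def by auto
  then show "t \<in> grow_cherry (Suc k) ` trees_avoiding (L - {Suc (Suc k)}) (k - 1)"
    using grow by (metis image_eqI)
next
  fix t assume "t \<in> grow_cherry (Suc k) ` trees_avoiding (L - {Suc (Suc k)}) (k - 1)"
  then obtain s where s: "t = grow_cherry (Suc k) s" "wf_tree s" "leaves s = L - {Suc (Suc k)}"
      "\<forall>i\<in>{1..k - 1}. \<not> has_cherry i s"
    unfolding trees_avoiding_def trees_on_def by auto
  have "\<not> has_cherry i t" if "i \<in> {1..k}" for i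
    using s that by (auto simp: has_cherry_grow_cherry)
  then show "t \<in> trees_first_cherry L k"
    using s assms wf_tree_grow_cherry[of s "Suc k"]
    by (auto simp: trees_first_cherry_def trees_avoiding_def trees_on_def
        leaves_grow_cherry has_cherry_grow_cherry)
qed

lemma card_trees_first_cherry_eq:
  assumes "Suc k \<in> L" "Suc (Suc k) \<in> L"
  shows "card (trees_first_cherry L k) = card (trees_avoiding (L - {Suc (Suc k)}) (k - 1))"
proof -
  have "inj_on (grow_cherry (Suc k)) (trees_avoiding (L - {Suc (Suc k)}) (k - 1))"
    by (rule inj_on_inverseI[where g = "contract_cherry (Suc k)"])
      (auto simp: trees_avoiding_def trees_on_def contract_grow_cherry)
  then show ?thesis
    using trees_first_cherry_eq_image[OF assms] card_image by metis
qed

lemma card_trees_avoiding: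
  assumes "finite L" "L \<noteq> {}"
  shows "int (card (trees_avoiding L k)) =
    int (fact (card L - 1)) - (\<Sum>s<k. int (card (trees_first_cherry L s)))"
proof (induction k)
  case 0
  then show ?case
    using card_trees_on[OF assms] by (simp add: trees_avoiding_0)
next
  case (Suc k)
  have "finite (trees_avoiding L k)"
    using finite_trees_on[OF assms] by (simp add: trees_avoiding_def)
  moreover have "trees_first_cherry L k \<subseteq> trees_avoiding L k"
    by (auto simp: trees_first_cherry_def)
  ultimately have "int (card (trees_avoiding L (Suc k))) =
      int (card (trees_avoiding L k)) - int (card (trees_first_cherry L k))"
    by (simp add: trees_avoiding_Suc card_Diff_subset card_mono finite_subset of_nat_diff)
  then show ?case
    using Suc by simp
qed

section \<open>The alternating factorial sum\<close>

definition alt_fact_sum :: "nat \<Rightarrow> nat \<Rightarrow> int" where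
  "alt_fact_sum m k = (\<Sum>j=0..k. int ((k - j) choose j) * (-1) ^ j * int (fact (m - 2 - j)))"

lemma alt_fact_sum_0: "alt_fact_sum m 0 = int (fact (m - 2))"
  by (simp add: alt_fact_sum_def)

lemma alt_fact_sum_1: "alt_fact_sum m (Suc 0) = int (fact (m - 2))"
  by (simp add: alt_fact_sum_def numeral_2_eq_2)

lemma alt_fact_sum_Suc_Suc:
  "alt_fact_sum m (Suc (Suc k)) = alt_fact_sum m (Suc k) - alt_fact_sum (m - 1) k"
proof -
  define a where "a m k j = int ((k - j) choose j) * (-1) ^ j * int (fact (m - 2 - j))"
    for m k j :: nat
  have extend: "alt_fact_sum m k = (\<Sum>j<N. a m k j)" if "k < N" for m k N
  proof -
    have "alt_fact_sum m k = (\<Sum>j<Suc k. a m k j)"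
      by (simp add: alt_fact_sum_def a_def atLeast0AtMost lessThan_Suc_atMost)
    also have "\<dots> = (\<Sum>j<N. a m k j)"
      by (rule sum.mono_neutral_left) (use that in \<open>auto simp: a_def\<close>)
    finally show ?thesis .
  qed
  have pascal: "a m (Suc (Suc k)) (Suc j) = a m (Suc k) (Suc j) - a (m - 1) k j" for j
  proof -
    have "(Suc (Suc k) - Suc j) choose Suc j = ((k - j) choose j) + ((Suc k - Suc j) choose Suc j)"
      by (cases "j \<le> k") (simp_all add: Suc_diff_le)
    moreover have "m - 2 - Suc j = m - 1 - 2 - j"
      by simp
    ultimately show ?thesis
      unfolding a_def by (simp add: algebra_simps)
  qed
  have "alt_fact_sum m (Suc (Suc k)) = (\<Sum>j<Suc (Suc (Suc k)). a m (Suc (Suc k)) j)"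
    by (rule extend) simp
  also have "\<dots> = a m (Suc (Suc k)) 0 + (\<Sum>j<Suc (Suc k). a m (Suc (Suc k)) (Suc j))"
    by (rule sum.lessThan_Suc_shift)
  also have "\<dots> = a m (Suc k) 0 + (\<Sum>j<Suc (Suc k). a m (Suc k) (Suc j) - a (m - 1) k j)"
    using pascal by (simp add: a_def[of m _ 0])
  also have "\<dots> = (\<Sum>j<Suc (Suc (Suc k)). a m (Suc k) j) - (\<Sum>j<Suc (Suc k). a (m - 1) k j)"
    by (simp only: sum.lessThan_Suc_shift[of "a m (Suc k)"] sum_subtractf add_diff_eq)
  also have "\<dots> = alt_fact_sum m (Suc k) - alt_fact_sum (m - 1) k"
    using extend[of "Suc k" "Suc (Suc (Suc k))"] extend[of k "Suc (Suc k)"] by simp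
  finally show ?thesis .
qed

lemma alt_fact_sum_Suc:
  "alt_fact_sum m (Suc k) = int (fact (m - 2)) - (\<Sum>s<k. alt_fact_sum (m - 1) s)"
  by (induction k) (simp_all add: alt_fact_sum_1 alt_fact_sum_Suc_Suc)

lemma card_trees_first_cherry:
  assumes "finite L" "{1..k + 2} \<subseteq> L"
  shows "int (card (trees_first_cherry L k)) = alt_fact_sum (card L) k"
  using assms
proof (induction k arbitrary: L rule: less_induct)
  case (less k)
  define L' where "L' = L - {Suc (Suc k)}"
  have in_L: "Suc k \<in> L" "Suc (Suc k) \<in> L"
    using less.prems(2) by auto
  then have L': "finite L'" "L' \<noteq> {}" "card L' - 1 = card L - 2"
    using less.prems(1) by (auto simp: L'_def)
  have "int (card (trees_first_cherry L k)) = int (card (trees_avoiding L' (k - 1)))"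
    using card_trees_first_cherry_eq[OF in_L] by (simp add: L'_def)
  also have "\<dots> = int (fact (card L - 2)) - (\<Sum>s<k - 1. int (card (trees_first_cherry L' s)))"
    using card_trees_avoiding[OF L'(1,2)] L'(3) by simp
  also have "(\<Sum>s<k - 1. int (card (trees_first_cherry L' s))) = (\<Sum>s<k - 1. alt_fact_sum (card L - 1) s)"
  proof (rule sum.cong[OF refl])
    fix s assume "s \<in> {..<k - 1}"
    then have "s < k" "{1..s + 2} \<subseteq> {1..k + 2} - {Suc (Suc k)}"
      by auto
    then have "s < k" "{1..s + 2} \<subseteq> L'"
      using less.prems(2) by (auto simp: L'_def)
    then show "int (card (trees_first_cherry L' s)) = alt_fact_sum (card L - 1) s"
      using less.IH L'(1) in_L less.prems(1) by (simp add: L'_def)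
  qed
  also have "int (fact (card L - 2)) - (\<Sum>s<k - 1. alt_fact_sum (card L - 1) s) = alt_fact_sum (card L) k"
    by (cases k) (simp_all add: alt_fact_sum_0 alt_fact_sum_Suc)
  finally show ?case .
qed

section \<open>Tree diagrams\<close>

definition rows_above :: "(nat \<times> nat) set \<Rightarrow> nat \<times> nat \<Rightarrow> nat set" where
  "rows_above P x = {i. i < fst x \<and> (i, snd x) \<in> P}"

definition cols_right :: "(nat \<times> nat) set \<Rightarrow> nat \<times> nat \<Rightarrow> nat set" where
  "cols_right P x = {j. snd x < j \<and> (fst x, j) \<in> P}"

definition diagram_parent :: "(nat \<times> nat) set \<Rightarrow> nat \<times> nat \<Rightarrow> nat \<times> nat" where
  "diagram_parent P x =
     (if rows_above P x \<noteq> {} then (Max (rows_above P x), snd x) else (fst x, Min (cols_right P x)))"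

definition diagram_children ::
    "nat \<times> nat \<Rightarrow> (nat \<times> nat) set \<Rightarrow> nat \<times> nat \<Rightarrow> (nat \<times> nat) set" where
  "diagram_children root P p = {q \<in> P. q \<noteq> root \<and> diagram_parent P q = p}"

text \<open>The axioms of an upper-diagonal CNM after reversing the column order \<open>j \<mapsto> n + 1 - j\<close>,
  for an arbitrary finite set \<open>L\<close> of leaf labels: the root \<open>(1, 1)\<close> becomes \<open>(Min L, Max L)\<close>,
  the leaves become the diagonal, and a parent is found above or to the right.\<close>

definition tree_diagram :: "nat set \<Rightarrow> (nat \<times> nat) set \<Rightarrow> bool" where
  "tree_diagram L P \<longleftrightarrow> finite L \<and> L \<noteq> {} \<and> P \<subseteq> L \<times> L \<and> (Min L, Max L) \<in> P \<and>
    (\<forall>x\<in>P. x \<noteq> (Min L, Max L) \<longrightarrow> (rows_above P x \<noteq> {}) \<noteq> (cols_right P x \<noteq> {})) \<and>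
    (\<forall>p\<in>P. card (diagram_children (Min L, Max L) P p) = 0 \<or>
            card (diagram_children (Min L, Max L) P p) = 2) \<and>
    {p\<in>P. diagram_children (Min L, Max L) P p = {}} = {(l, l) | l. l \<in> L}"

lemma finite_rows_above: "finite P \<Longrightarrow> finite (rows_above P x)"
  unfolding rows_above_def by (rule finite_subset[of _ "fst ` P"]) force+

lemma finite_cols_right: "finite P \<Longrightarrow> finite (cols_right P x)"
  unfolding cols_right_def by (rule finite_subset[of _ "snd ` P"]) force+

lemma tree_diagram_finite: "tree_diagram L P \<Longrightarrow> finite P"
  unfolding tree_diagram_def using finite_subset[of P "L \<times> L"] by auto

lemma tree_diagram_memD:
  "tree_diagram L P \<Longrightarrow> x \<in> P \<Longrightarrow> fst x \<in> L \<and> snd x \<in> L \<and> Min L \<le> fst x \<and> snd x \<le> Max L"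
  unfolding tree_diagram_def by auto

lemma rows_above_root: "tree_diagram L P \<Longrightarrow> rows_above P (Min L, Max L) = {}"
  using tree_diagram_memD[of L P] by (fastforce simp: rows_above_def)

lemma cols_right_root: "tree_diagram L P \<Longrightarrow> cols_right P (Min L, Max L) = {}"
  using tree_diagram_memD[of L P] by (fastforce simp: cols_right_def)

lemma diagram_parent_cases:
  assumes "tree_diagram L P" "x \<in> P" "x \<noteq> (Min L, Max L)"
  shows "(rows_above P x \<noteq> {} \<and> diagram_parent P x = (Max (rows_above P x), snd x) \<and>
            Max (rows_above P x) \<in> rows_above P x) \<or>
         (rows_above P x = {} \<and> diagram_parent P x = (fst x, Min (cols_right P x)) \<and>
            Min (cols_right P x) \<in> cols_right P x)"
proof (cases "rows_above P x = {}")
  case True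
  then have "cols_right P x \<noteq> {}"
    using assms unfolding tree_diagram_def by auto
  then show ?thesis
    using True finite_cols_right[OF tree_diagram_finite[OF assms(1)]]
    by (simp add: diagram_parent_def)
next
  case False
  then show ?thesis
    using finite_rows_above[OF tree_diagram_finite[OF assms(1)]]
    by (simp add: diagram_parent_def)
qed

lemma diagram_parent_in:
  assumes "tree_diagram L P" "x \<in> P" "x \<noteq> (Min L, Max L)"
  shows "diagram_parent P x \<in> P"
  using diagram_parent_cases[OF assms] by (auto simp: rows_above_def cols_right_def)

lemma tree_diagram_singleton: "tree_diagram {x} {(x, x)}"
  by (auto simp: tree_diagram_def diagram_children_def)

locale diagram_join =
  fixes A B :: "nat set" and PA PB :: "(nat \<times> nat) set"
  assumes diagram_A: "tree_diagram A PA" and diagram_B: "tree_diagram B PB"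
    and disjoint: "A \<inter> B = {}" and Min_less: "Min A < Min B" and Max_less: "Max A < Max B"
begin

abbreviation joined :: "(nat \<times> nat) set" where
  "joined \<equiv> insert (Min A, Max B) (PA \<union> PB)"

lemma finite_nonempty: "finite A" "A \<noteq> {}" "finite B" "B \<noteq> {}"
  using diagram_A diagram_B unfolding tree_diagram_def by auto

lemma roots_in: "(Min A, Max A) \<in> PA" "(Min B, Max B) \<in> PB"
  using diagram_A diagram_B unfolding tree_diagram_def by auto

lemma memD_A: "x \<in> PA \<Longrightarrow> fst x \<in> A \<and> snd x \<in> A \<and> Min A \<le> fst x \<and> snd x \<le> Max A"
  using tree_diagram_memD[OF diagram_A] .

lemma memD_B: "x \<in> PB \<Longrightarrow> fst x \<in> B \<and> snd x \<in> B \<and> Min B \<le> fst x \<and> snd x \<le> Max B"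
  using tree_diagram_memD[OF diagram_B] .

lemma Min_Max_in: "Min A \<in> A" "Max A \<in> A" "Min B \<in> B" "Max B \<in> B"
  using finite_nonempty by simp_all

lemma root_notin: "(Min A, Max B) \<notin> PA" "(Min A, Max B) \<notin> PB"
  using memD_A[of "(Min A, Max B)"] memD_B[of "(Min A, Max B)"] Min_Max_in disjoint by auto

lemma PA_PB_disjoint: "x \<in> PA \<Longrightarrow> x \<notin> PB"
  using memD_A memD_B disjoint by blast

lemma rows_above_joined_A: "x \<in> PA \<Longrightarrow> rows_above joined x = rows_above PA x"
  using memD_A[of x] memD_B Min_Max_in disjoint by (force simp: rows_above_def)

lemma cols_right_joined_A:
  "x \<in> PA \<Longrightarrow> cols_right joined x = cols_right PA x \<union> (if fst x = Min A then {Max B} else {})"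
  using memD_A[of x] memD_B Max_less disjoint by (force simp: cols_right_def)

lemma rows_above_joined_B:
  "x \<in> PB \<Longrightarrow> rows_above joined x = rows_above PB x \<union> (if snd x = Max B then {Min A} else {})"
  using memD_B[of x] memD_A Min_less disjoint by (force simp: rows_above_def)

lemma cols_right_joined_B: "x \<in> PB \<Longrightarrow> cols_right joined x = cols_right PB x"
  using memD_B[of x] memD_A Min_Max_in disjoint by (force simp: cols_right_def)

lemma diagram_parent_joined_A:
  assumes "x \<in> PA" "x \<noteq> (Min A, Max A)"
  shows "diagram_parent joined x = diagram_parent PA x"
proof (cases "rows_above PA x = {}")
  case True
  then have "cols_right PA x \<noteq> {}"
    using diagram_A assms unfolding tree_diagram_def by auto
  moreover have fin: "finite (cols_right PA x)"
    using finite_cols_right[OF tree_diagram_finite[OF diagram_A]] .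
  define m where "m = Min (cols_right PA x)"
  have "m \<in> cols_right PA x"
    using fin \<open>cols_right PA x \<noteq> {}\<close> by (simp add: m_def)
  then have "m < Max B"
    using memD_A Max_less by (force simp: cols_right_def)
  then have "Min (cols_right joined x) = m"
    using cols_right_joined_A[OF assms(1)] fin \<open>cols_right PA x \<noteq> {}\<close>
    by (simp add: Min_insert m_def[symmetric])
  then have "Min (cols_right joined x) = Min (cols_right PA x)"
    by (simp add: m_def)
  then show ?thesis
    using True rows_above_joined_A[OF assms(1)] by (simp add: diagram_parent_def)
qed (simp add: diagram_parent_def rows_above_joined_A[OF assms(1)])

lemma diagram_parent_joined_root_A: "diagram_parent joined (Min A, Max A) = (Min A, Max B)"
  using rows_above_joined_A[OF roots_in(1)] cols_right_joined_A[OF roots_in(1)] rows_above_root[OF diagram_A]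
    cols_right_root[OF diagram_A]
  by (simp add: diagram_parent_def)

lemma snd_ne_Max_B:
  assumes "x \<in> PB" "x \<noteq> (Min B, Max B)" "rows_above PB x = {}"
  shows "snd x \<noteq> Max B"
proof
  assume "snd x = Max B"
  moreover from this have "fst x \<noteq> Min B"
    using assms(2) by (metis prod.collapse)
  then have "Min B < fst x"
    using memD_B[OF assms(1)] by auto
  ultimately have "Min B \<in> rows_above PB x"
    using roots_in(2) by (simp add: rows_above_def)
  then show False
    using assms(3) by auto
qed

lemma diagram_parent_joined_B:
  assumes "x \<in> PB" "x \<noteq> (Min B, Max B)"
  shows "diagram_parent joined x = diagram_parent PB x"
proof (cases "rows_above PB x = {}")
  case False
  moreover have fin: "finite (rows_above PB x)"
    using finite_rows_above[OF tree_diagram_finite[OF diagram_B]] .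
  define m where "m = Max (rows_above PB x)"
  have "m \<in> rows_above PB x"
    using fin \<open>rows_above PB x \<noteq> {}\<close> by (simp add: m_def)
  then have "Min A < m"
    using memD_B Min_less by (force simp: rows_above_def)
  then have "Max (rows_above joined x) = m"
    using rows_above_joined_B[OF assms(1)] fin \<open>rows_above PB x \<noteq> {}\<close>
    by (simp add: Max_insert m_def[symmetric])
  then have "Max (rows_above joined x) = Max (rows_above PB x)"
    by (simp add: m_def)
  then show ?thesis
    using False rows_above_joined_B[OF assms(1)] by (simp add: diagram_parent_def)
next
  case True
  then show ?thesis
    using snd_ne_Max_B[OF assms True] rows_above_joined_B[OF assms(1)] cols_right_joined_B[OF assms(1)]
    by (simp add: diagram_parent_def)
qed

lemma diagram_parent_joined_root_B: "diagram_parent joined (Min B, Max B) = (Min A, Max B)"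
  using rows_above_joined_B[OF roots_in(2)] cols_right_joined_B[OF roots_in(2)] rows_above_root[OF diagram_B]
    cols_right_root[OF diagram_B]
  by (simp add: diagram_parent_def)


lemma rows_above_cols_right_xor_joined:
  assumes "x \<in> joined" "x \<noteq> (Min A, Max B)"
  shows "(rows_above joined x \<noteq> {}) \<noteq> (cols_right joined x \<noteq> {})"
proof -
  have xor_A: "(rows_above PA x \<noteq> {}) \<noteq> (cols_right PA x \<noteq> {})" if "x \<in> PA" "x \<noteq> (Min A, Max A)"
    using diagram_A that unfolding tree_diagram_def by auto
  have xor_B: "(rows_above PB x \<noteq> {}) \<noteq> (cols_right PB x \<noteq> {})" if "x \<in> PB" "x \<noteq> (Min B, Max B)"
    using diagram_B that unfolding tree_diagram_def by auto
  from assms consider "x \<in> PA" | "x \<in> PB"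
    by auto
  then show ?thesis
  proof cases
    case 1
    show ?thesis
    proof (cases "fst x = Min A")
      case True
      then have "rows_above PA x = {}"
        using memD_A by (force simp: rows_above_def)
      then show ?thesis
        using True rows_above_joined_A[OF 1] cols_right_joined_A[OF 1] by simp
    next
      case False
      then have "x \<noteq> (Min A, Max A)"
        by auto
      then show ?thesis
        using False rows_above_joined_A[OF 1] cols_right_joined_A[OF 1] xor_A[OF 1] by simp
    qed
  next
    case 2
    show ?thesis
    proof (cases "x = (Min B, Max B)")
      case True
      then show ?thesis
        using rows_above_joined_B[OF 2] cols_right_joined_B[OF 2] cols_right_root[OF diagram_B] by simp
    next
      case False
      then show ?thesis
        using rows_above_joined_B[OF 2] cols_right_joined_B[OF 2] xor_B[OF 2 False]
          snd_ne_Max_B[OF 2 False] by auto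
    qed
  qed
qed

lemma diagram_children_joined_A:
  assumes "p \<in> PA"
  shows "diagram_children (Min A, Max B) joined p = diagram_children (Min A, Max A) PA p"
proof (intro set_eqI iffI)
  fix q assume "q \<in> diagram_children (Min A, Max B) joined p"
  then have q: "q \<in> joined" "q \<noteq> (Min A, Max B)" "diagram_parent joined q = p"
    unfolding diagram_children_def by auto
  have not_root: "q \<noteq> (Min A, Max A)" "q \<noteq> (Min B, Max B)"
    using q(3) assms root_notin diagram_parent_joined_root_A diagram_parent_joined_root_B by auto
  have "q \<notin> PB"
  proof
    assume "q \<in> PB"
    then show False
      using q(3) assms diagram_parent_joined_B[OF _ not_root(2)]
        diagram_parent_in[OF diagram_B _ not_root(2)] PA_PB_disjoint by auto
  qed
  then have "q \<in> PA"
    using q(1,2) by auto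
  then show "q \<in> diagram_children (Min A, Max A) PA p"
    using q(3) not_root(1) diagram_parent_joined_A unfolding diagram_children_def by auto
next
  fix q assume "q \<in> diagram_children (Min A, Max A) PA p"
  then show "q \<in> diagram_children (Min A, Max B) joined p"
    using diagram_parent_joined_A root_notin unfolding diagram_children_def by auto
qed

lemma diagram_children_joined_B:
  assumes "p \<in> PB"
  shows "diagram_children (Min A, Max B) joined p = diagram_children (Min B, Max B) PB p"
proof (intro set_eqI iffI)
  fix q assume "q \<in> diagram_children (Min A, Max B) joined p"
  then have q: "q \<in> joined" "q \<noteq> (Min A, Max B)" "diagram_parent joined q = p"
    unfolding diagram_children_def by auto
  have not_root: "q \<noteq> (Min A, Max A)" "q \<noteq> (Min B, Max B)"
    using q(3) assms root_notin diagram_parent_joined_root_A diagram_parent_joined_root_B by auto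
  have "q \<notin> PA"
  proof
    assume "q \<in> PA"
    then show False
      using q(3) assms diagram_parent_joined_A[OF _ not_root(1)]
        diagram_parent_in[OF diagram_A _ not_root(1)] PA_PB_disjoint by auto
  qed
  then have "q \<in> PB"
    using q(1,2) by auto
  then show "q \<in> diagram_children (Min B, Max B) PB p"
    using q(3) not_root(2) diagram_parent_joined_B unfolding diagram_children_def by auto
next
  fix q assume "q \<in> diagram_children (Min B, Max B) PB p"
  then show "q \<in> diagram_children (Min A, Max B) joined p"
    using diagram_parent_joined_B root_notin unfolding diagram_children_def by auto
qed

lemma diagram_children_joined_root:
  "diagram_children (Min A, Max B) joined (Min A, Max B) = {(Min A, Max A), (Min B, Max B)}"
proof (intro set_eqI iffI)
  fix q assume "q \<in> diagram_children (Min A, Max B) joined (Min A, Max B)"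
  then have q: "q \<in> PA \<union> PB" "diagram_parent joined q = (Min A, Max B)"
    unfolding diagram_children_def by auto
  show "q \<in> {(Min A, Max A), (Min B, Max B)}"
  proof (rule ccontr)
    assume "q \<notin> {(Min A, Max A), (Min B, Max B)}"
    then have not_root: "q \<noteq> (Min A, Max A)" "q \<noteq> (Min B, Max B)"
      by auto
    from q(1) consider "q \<in> PA" | "q \<in> PB"
      by blast
    then have "diagram_parent joined q \<in> PA \<union> PB"
    proof cases
      case 1
      then show ?thesis
        using diagram_parent_joined_A[OF 1 not_root(1)] diagram_parent_in[OF diagram_A 1 not_root(1)]
        by simp
    next
      case 2
      then show ?thesis
        using diagram_parent_joined_B[OF 2 not_root(2)] diagram_parent_in[OF diagram_B 2 not_root(2)]
        by simp
    qed
    then show False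
      using q(2) root_notin by auto
  qed
next
  fix q assume "q \<in> {(Min A, Max A), (Min B, Max B)}"
  then show "q \<in> diagram_children (Min A, Max B) joined (Min A, Max B)"
    using roots_in root_notin diagram_parent_joined_root_A diagram_parent_joined_root_B
    unfolding diagram_children_def by auto
qed

lemma card_diagram_children_joined:
  assumes "p \<in> joined"
  shows "card (diagram_children (Min A, Max B) joined p) = 0 \<or>
    card (diagram_children (Min A, Max B) joined p) = 2"
proof -
  from assms consider "p = (Min A, Max B)" | "p \<in> PA" | "p \<in> PB"
    by blast
  then show ?thesis
  proof cases
    case 1
    then show ?thesis
      using diagram_children_joined_root Min_less by simp
  next
    case 2
    then show ?thesis
      using diagram_A diagram_children_joined_A[OF 2] unfolding tree_diagram_def by simp
  next
    case 3
    then show ?thesis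
      using diagram_B diagram_children_joined_B[OF 3] unfolding tree_diagram_def by simp
  qed
qed

lemma childless_joined:
  "{p\<in>joined. diagram_children (Min A, Max B) joined p = {}} =
    {p\<in>PA. diagram_children (Min A, Max A) PA p = {}} \<union>
    {p\<in>PB. diagram_children (Min B, Max B) PB p = {}}"
proof (intro set_eqI)
  fix p
  show "p \<in> {p\<in>joined. diagram_children (Min A, Max B) joined p = {}} \<longleftrightarrow>
      p \<in> {p\<in>PA. diagram_children (Min A, Max A) PA p = {}} \<union>
        {p\<in>PB. diagram_children (Min B, Max B) PB p = {}}"
  proof (cases "p \<in> PA")
    case True
    then show ?thesis
      using diagram_children_joined_A[OF True] PA_PB_disjoint[OF True] by simp
  next
    case not_A: False
    show ?thesis
    proof (cases "p \<in> PB")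
      case True
      then show ?thesis
        using diagram_children_joined_B[OF True] not_A by simp
    next
      case False
      then show ?thesis
        using not_A diagram_children_joined_root by auto
    qed
  qed
qed

theorem tree_diagram_joined: "tree_diagram (A \<union> B) joined"
proof -
  have Min_Max: "Min (A \<union> B) = Min A" "Max (A \<union> B) = Max B"
    using finite_nonempty Min_less Max_less by (simp_all add: Min_Un Max_Un)
  have "joined \<subseteq> (A \<union> B) \<times> (A \<union> B)"
  proof
    fix x assume "x \<in> joined"
    then show "x \<in> (A \<union> B) \<times> (A \<union> B)"
      using memD_A[of x] memD_B[of x] Min_Max_in by (cases x) auto
  qed
  moreover have "{p\<in>joined. diagram_children (Min A, Max B) joined p = {}} = {(l, l) | l. l \<in> A \<union> B}"
    using diagram_A diagram_B unfolding childless_joined tree_diagram_def by auto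
  ultimately show ?thesis
    unfolding tree_diagram_def Min_Max
    using finite_nonempty rows_above_cols_right_xor_joined card_diagram_children_joined by auto
qed

end

lemma tree_diagram_spans: "wf_tree t \<Longrightarrow> tree_diagram (leaves t) (spans t)"
proof (induction t)
  case (Leaf x)
  then show ?case
    using tree_diagram_singleton by simp
next
  case (Node l r)
  then have "diagram_join (leaves l) (leaves r) (spans l) (spans r)"
    by unfold_locales (auto simp: leftmost_eq_Min rightmost_eq_Max)
  then show ?case
    using diagram_join.tree_diagram_joined Node.prems
    by (fastforce simp: leftmost_eq_Min rightmost_eq_Max)
qed

locale diagram =
  fixes L :: "nat set" and P :: "(nat \<times> nat) set"
  assumes diagram: "tree_diagram L P"
begin

abbreviation root :: "nat \<times> nat" where
  "root \<equiv> (Min L, Max L)"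

abbreviation children :: "nat \<times> nat \<Rightarrow> (nat \<times> nat) set" where
  "children \<equiv> diagram_children root P"

lemma finite_L: "finite L"
  using diagram unfolding tree_diagram_def by auto

lemma finite_P: "finite P"
  using tree_diagram_finite[OF diagram] .

lemma root_in: "root \<in> P"
  using diagram unfolding tree_diagram_def by auto

lemma memD: "x \<in> P \<Longrightarrow> fst x \<in> L \<and> snd x \<in> L \<and> Min L \<le> fst x \<and> snd x \<le> Max L"
  using tree_diagram_memD[OF diagram] .

lemma childrenD: "x \<in> children q \<Longrightarrow> diagram_parent P x = q \<and> x \<in> P \<and> x \<noteq> root"
  unfolding diagram_children_def by auto

lemma card_children: "p \<in> P \<Longrightarrow> card (children p) = 0 \<or> card (children p) = 2"
  using diagram unfolding tree_diagram_def by auto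

lemma leaf_iff_diagonal:
  assumes "p \<in> P"
  shows "children p = {} \<longleftrightarrow> fst p = snd p"
proof -
  have leaves_eq: "{p \<in> P. children p = {}} = {(l, l) | l. l \<in> L}"
    using diagram unfolding tree_diagram_def by (elim conjE) assumption
  show ?thesis
  proof
    assume "children p = {}"
    then have "p \<in> {(l, l) | l. l \<in> L}"
      using leaves_eq assms by blast
    then show "fst p = snd p"
      by auto
  next
    assume "fst p = snd p"
    then have "p \<in> {(l, l) | l. l \<in> L}"
      using memD[OF assms] by (cases p) auto
    then show "children p = {}"
      using leaves_eq by blast
  qed
qed

lemma children_cases:
  assumes "x \<in> children p"
  shows "(snd x = snd p \<and> fst p < fst x \<and> fst p = Max (rows_above P x)) \<or>
    (fst x = fst p \<and> snd x < snd p \<and> rows_above P x = {} \<and> snd p = Min (cols_right P x))"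
proof -
  have x: "diagram_parent P x = p" "x \<in> P" "x \<noteq> root"
    using childrenD[OF assms] by auto
  from diagram_parent_cases[OF diagram x(2,3)] show ?thesis
  proof (elim disjE conjE)
    assume "rows_above P x \<noteq> {}" "diagram_parent P x = (Max (rows_above P x), snd x)"
      "Max (rows_above P x) \<in> rows_above P x"
    then show ?thesis
      using x(1) by (auto simp: rows_above_def)
  next
    assume "rows_above P x = {}" "diagram_parent P x = (fst x, Min (cols_right P x))"
      "Min (cols_right P x) \<in> cols_right P x"
    then show ?thesis
      using x(1) by (auto simp: cols_right_def)
  qed
qed

definition potential :: "nat \<times> nat \<Rightarrow> nat" where
  "potential x = (Max L - fst x) + snd x"

lemma potential_less_parent:
  assumes "x \<in> children p"
  shows "potential x < potential p"
proof -
  have "fst x \<le> Max L"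
    using memD[of x] childrenD[OF assms] finite_L by auto
  then show ?thesis
    using children_cases[OF assms] unfolding potential_def by auto
qed

lemma potential_le: "x \<in> P \<Longrightarrow> potential x \<le> 2 * Max L"
  using memD[of x] unfolding potential_def by linarith

lemma children_column_unique:
  assumes "a \<in> children p" "b \<in> children p" "snd a = snd p" "snd b = snd p"
    "fst p = Max (rows_above P a)" "fst p = Max (rows_above P b)" "fst p < fst a" "fst p < fst b"
  shows "a = b"
proof -
  have "\<not> fst a < fst b" if "a \<in> children p" "b \<in> children p" "snd a = snd p" "snd b = snd p"
    "fst p = Max (rows_above P b)" "fst p < fst a" for a b
  proof
    assume "fst a < fst b"
    then have "fst a \<in> rows_above P b"
      using that childrenD[of a p] by (cases a) (simp add: rows_above_def)
    then have "fst a \<le> fst p"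
      using that(5) finite_rows_above[OF finite_P] by simp
    then show False
      using that(6) by simp
  qed
  then have "fst a = fst b"
    using assms by (meson linorder_neqE)
  then show ?thesis
    using assms(3,4) by (simp add: prod_eq_iff)
qed

lemma children_row_unique:
  assumes "a \<in> children p" "b \<in> children p" "fst a = fst p" "fst b = fst p"
    "snd p = Min (cols_right P a)" "snd p = Min (cols_right P b)" "snd a < snd p" "snd b < snd p"
  shows "a = b"
proof -
  have "\<not> snd a < snd b" if "a \<in> children p" "b \<in> children p" "fst a = fst p" "fst b = fst p"
    "snd p = Min (cols_right P a)" "snd b < snd p" for a b
  proof
    assume "snd a < snd b"
    then have "snd b \<in> cols_right P a"
      using that childrenD[of b p] by (cases b) (simp add: cols_right_def)
    then have "snd p \<le> snd b"
      using that(5) finite_cols_right[OF finite_P] by simp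
    then show False
      using that(6) by simp
  qed
  then have "snd a = snd b"
    using assms by (meson linorder_neqE)
  then show ?thesis
    using assms(3,4) by (simp add: prod_eq_iff)
qed

lemma children_two:
  assumes "p \<in> P" "children p \<noteq> {}"
  obtains q1 q2 where "children p = {q1, q2}" "snd q1 = snd p" "fst p < fst q1"
    "fst q2 = fst p" "snd q2 < snd p"
proof -
  have "finite (children p)"
    using finite_P unfolding diagram_children_def by simp
  then have "card (children p) = 2"
    using card_children[OF assms(1)] assms(2) by auto
  then obtain a b where ab: "children p = {a, b}" "a \<noteq> b"
    by (meson card_2_iff)
  then have a: "a \<in> children p" and b: "b \<in> children p"
    by auto
  from children_cases[OF a] children_cases[OF b] show thesis
  proof (elim disjE conjE)
    assume "snd a = snd p" "fst p < fst a" "fst p = Max (rows_above P a)"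
      "snd b = snd p" "fst p < fst b" "fst p = Max (rows_above P b)"
    then show thesis
      using children_column_unique[OF a b] ab(2) by simp
  next
    assume "fst a = fst p" "snd a < snd p" "snd p = Min (cols_right P a)"
      "fst b = fst p" "snd b < snd p" "snd p = Min (cols_right P b)"
    then show thesis
      using children_row_unique[OF a b] ab(2) by simp
  next
    assume "snd a = snd p" "fst p < fst a" "fst b = fst p" "snd b < snd p"
    then show thesis
      using that[of a b] ab(1) by simp
  next
    assume "fst a = fst p" "snd a < snd p" "snd b = snd p" "fst p < fst b"
    then show thesis
      using that[of b a] ab(1) by (simp add: insert_commute)
  qed
qed

inductive descendant :: "nat \<times> nat \<Rightarrow> nat \<times> nat \<Rightarrow> bool" where
  refl: "p \<in> P \<Longrightarrow> descendant p p"
| child: "descendant p q \<Longrightarrow> x \<in> children q \<Longrightarrow> descendant p x"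

lemma descendant_in: "descendant p x \<Longrightarrow> x \<in> P"
  by (induction rule: descendant.induct) (auto dest: childrenD)

lemma descendant_potential: "descendant p x \<Longrightarrow> x \<noteq> p \<Longrightarrow> potential x < potential p"
  by (induction rule: descendant.induct) (use potential_less_parent in fastforce)+

lemma descendant_parent:
  "descendant p x \<Longrightarrow> x \<noteq> p \<Longrightarrow> descendant p (diagram_parent P x) \<and> x \<in> children (diagram_parent P x)"
proof (induction rule: descendant.induct)
  case (child p q x)
  then have "diagram_parent P x = q"
    using childrenD by blast
  then show ?case
    using child.hyps by simp
qed simp

lemma descendant_trans: "descendant q x \<Longrightarrow> descendant p q \<Longrightarrow> descendant p x"
  by (induction rule: descendant.induct) (auto intro: child)

lemma descendant_linear: "descendant a x \<Longrightarrow> descendant b x \<Longrightarrow> descendant a b \<or> descendant b a"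
proof (induction arbitrary: b rule: descendant.induct)
  case (refl p)
  then show ?case by simp
next
  case (child p q x)
  show ?case
  proof (cases "x = b")
    case True
    then show ?thesis
      using child.hyps descendant.child by blast
  next
    case False
    then show ?thesis
      using descendant_parent[OF child.prems] child.hyps child.IH childrenD by auto
  qed
qed

lemma root_descendant: "x \<in> P \<Longrightarrow> descendant root x"
proof (induction "2 * Max L - potential x" arbitrary: x rule: less_induct)
  case less
  show ?case
  proof (cases "x = root")
    case True
    then show ?thesis using root_in refl by simp
  next
    case False
    then have x_child: "x \<in> children (diagram_parent P x)"
      using less.prems unfolding diagram_children_def by auto
    have parent_in: "diagram_parent P x \<in> P"
      using diagram_parent_in[OF diagram less.prems False] .
    have "2 * Max L - potential (diagram_parent P x) < 2 * Max L - potential x"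
      using potential_less_parent[OF x_child] potential_le[OF parent_in] by linarith
    then have "descendant root (diagram_parent P x)"
      using less.hyps parent_in by blast
    then show ?thesis
      using x_child by (rule child)
  qed
qed

definition descendants :: "nat \<times> nat \<Rightarrow> (nat \<times> nat) set" where
  "descendants p = {x. descendant p x}"

lemma descendants_leaf: "p \<in> P \<Longrightarrow> children p = {} \<Longrightarrow> descendants p = {p}"
proof -
  assume "p \<in> P" "children p = {}"
  moreover have "descendant a x \<Longrightarrow> a = p \<Longrightarrow> children p = {} \<Longrightarrow> x = p" for a x
    by (induction rule: descendant.induct) auto
  ultimately show ?thesis
    unfolding descendants_def by (blast intro: refl)
qed

lemma descendants_children:
  assumes "p \<in> P" "children p = {q1, q2}"
  shows "descendants p = insert p (descendants q1 \<union> descendants q2)"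
proof (intro set_eqI iffI)
  have q_in: "q1 \<in> P" "q2 \<in> P"
    using assms childrenD by blast+
  fix x assume "x \<in> descendants p"
  then have "descendant p x"
    unfolding descendants_def by auto
  moreover have "descendant a y \<Longrightarrow> a = p \<Longrightarrow> y \<in> insert p (descendants q1 \<union> descendants q2)" for a y
  proof (induction rule: descendant.induct)
    case (child p' q x)
    then consider "q = p" | "q \<in> descendants q1" | "q \<in> descendants q2"
      by auto
    then show ?case
      using child.hyps(2) assms(2) q_in by cases (auto simp: descendants_def intro: descendant.intros)
  qed simp
  ultimately show "x \<in> insert p (descendants q1 \<union> descendants q2)"
    by blast
next
  fix x assume "x \<in> insert p (descendants q1 \<union> descendants q2)"
  moreover have "descendant p q1" "descendant p q2"
    using assms descendant.intros by blast+
  ultimately show "x \<in> descendants p"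
    using assms(1) descendant.refl descendant_trans unfolding descendants_def by blast
qed

lemma descendants_disjoint:
  assumes "children p = {q1, q2}" "q1 \<noteq> q2"
  shows "descendants q1 \<inter> descendants q2 = {}"
proof (rule ccontr)
  assume "descendants q1 \<inter> descendants q2 \<noteq> {}"
  then obtain x where "descendant q1 x" "descendant q2 x"
    unfolding descendants_def by auto
  then have "descendant q1 q2 \<or> descendant q2 q1"
    using descendant_linear by blast
  moreover have "diagram_parent P q1 = p" "diagram_parent P q2 = p"
    using assms(1) childrenD by blast+
  moreover have "\<not> descendant q p" if "q \<in> {q1, q2}" for q
    using descendant_potential[of q p] potential_less_parent[of q p] assms(1) that by auto
  ultimately show False
    using descendant_parent[of q1 q2] descendant_parent[of q2 q1] assms(2) by auto
qed

text \<open>The tree is rebuilt bottom-up: the child below a point spans the right subtree, the child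
  to its left the left subtree.\<close>

lemma descendants_tree:
  "p \<in> P \<Longrightarrow> \<exists>t. wf_tree t \<and> spans t = descendants p \<and> leftmost t = fst p \<and>
     rightmost t = snd p \<and> leaves t = {l. (l, l) \<in> descendants p}"
proof (induction "potential p" arbitrary: p rule: less_induct)
  case less
  show ?case
  proof (cases "children p = {}")
    case True
    then have "fst p = snd p" "descendants p = {p}"
      using leaf_iff_diagonal descendants_leaf less.prems by auto
    then show ?thesis
      by (intro exI[of _ "Leaf (fst p)"]) (auto simp: prod_eq_iff)
  next
    case False
    obtain q1 q2 where q: "children p = {q1, q2}" "snd q1 = snd p" "fst p < fst q1"
      "fst q2 = fst p" "snd q2 < snd p"
      using children_two[OF less.prems False] by blast
    have q_in: "q1 \<in> P" "q2 \<in> P"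
      using q(1) childrenD by blast+
    obtain t1 where t1: "wf_tree t1" "spans t1 = descendants q1" "leftmost t1 = fst q1"
        "rightmost t1 = snd q1" "leaves t1 = {l. (l, l) \<in> descendants q1}"
      using less.hyps[OF potential_less_parent q_in(1)] q(1) by blast
    obtain t2 where t2: "wf_tree t2" "spans t2 = descendants q2" "leftmost t2 = fst q2"
        "rightmost t2 = snd q2" "leaves t2 = {l. (l, l) \<in> descendants q2}"
      using less.hyps[OF potential_less_parent q_in(2)] q(1) by blast
    have "q1 \<noteq> q2"
      using q(3,4) by auto
    then have disj: "descendants q1 \<inter> descendants q2 = {}"
      using descendants_disjoint[OF q(1)] by simp
    have p_split: "descendants p = insert p (descendants q1 \<union> descendants q2)"
      using descendants_children[OF less.prems q(1)] .
    have "fst p \<noteq> snd p"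
      using leaf_iff_diagonal less.prems False by auto
    then show ?thesis
      using t1 t2 disj q p_split by (intro exI[of _ "Node t2 t1"]) auto
  qed
qed

lemma exists_tree: "\<exists>t. wf_tree t \<and> leaves t = L \<and> spans t = P"
proof -
  obtain t where t: "wf_tree t" "spans t = descendants root" "leaves t = {l. (l, l) \<in> descendants root}"
    using descendants_tree[OF root_in] by auto
  have "descendants root = P"
    using root_descendant descendant_in unfolding descendants_def by blast
  moreover have "{l. (l, l) \<in> P} = L"
    using diagram memD unfolding tree_diagram_def by force
  ultimately show ?thesis
    using t by auto
qed

end

lemma tree_diagram_iff: "tree_diagram L P \<longleftrightarrow> (\<exists>t. wf_tree t \<and> leaves t = L \<and> spans t = P)"
  using diagram.exists_tree[OF diagram.intro] tree_diagram_spans by metis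

section \<open>Upper-diagonal CNMs as tree diagrams\<close>

definition col_flip :: "nat \<Rightarrow> nat \<times> nat \<Rightarrow> nat \<times> nat" where
  "col_flip n x = (fst x, Suc n - snd x)"

abbreviation square :: "nat \<Rightarrow> (nat \<times> nat) set" where
  "square n \<equiv> {1..n} \<times> {1..n}"

lemma col_flip_in_square: "x \<in> square n \<Longrightarrow> col_flip n x \<in> square n"
  unfolding col_flip_def by auto

lemma col_flip_col_flip: "x \<in> square n \<Longrightarrow> col_flip n (col_flip n x) = x"
  unfolding col_flip_def by (cases x) auto

lemma inj_on_col_flip: "inj_on (col_flip n) (square n)"
  by (rule inj_on_inverseI[where g = "col_flip n"]) (rule col_flip_col_flip)

lemma col_flip_image_subset: "A \<subseteq> square n \<Longrightarrow> col_flip n ` A \<subseteq> square n"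
  using col_flip_in_square by blast

lemma col_flip_image_image:
  assumes "A \<subseteq> square n"
  shows "col_flip n ` col_flip n ` A = A"
proof -
  have "col_flip n ` col_flip n ` A = (\<lambda>x. col_flip n (col_flip n x)) ` A"
    by (simp add: image_image)
  also have "\<dots> = A"
    using assms col_flip_col_flip by (auto intro!: image_eqI)
  finally show ?thesis .
qed

lemma anti_diagonal_iff_cherry:
  assumes "A \<subseteq> square n" "1 \<le> i" "i < n"
  shows "(i, n - i) \<in> A \<longleftrightarrow> (i, Suc i) \<in> col_flip n ` A"
proof
  have flip: "col_flip n (i, n - i) = (i, Suc i)"
    using assms(3) by (auto simp: col_flip_def)
  show "(i, n - i) \<in> A \<Longrightarrow> (i, Suc i) \<in> col_flip n ` A"
    using flip by force
  assume "(i, Suc i) \<in> col_flip n ` A"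
  then obtain z where "z \<in> A" "col_flip n z = col_flip n (i, n - i)"
    using flip by auto
  moreover have "z \<in> square n" "(i, n - i) \<in> square n"
    using assms \<open>z \<in> A\<close> by auto
  ultimately show "(i, n - i) \<in> A"
    using inj_on_col_flip[of n] unfolding inj_on_def by metis
qed

lemma col_flip_anti_diagonal:
  "col_flip n ` {(i, n + 1 - i) | i. 1 \<le> i \<and> i \<le> n} = {(l, l) | l. l \<in> {1..n}}"
proof (intro set_eqI iffI)
  fix y assume "y \<in> col_flip n ` {(i, n + 1 - i) | i. 1 \<le> i \<and> i \<le> n}"
  then obtain i where "y = col_flip n (i, n + 1 - i)" "1 \<le> i" "i \<le> n"
    by auto
  then show "y \<in> {(l, l) | l. l \<in> {1..n}}"
    by (auto simp: col_flip_def)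
next
  fix y assume "y \<in> {(l, l) | l. l \<in> {1..n}}"
  then obtain l where l: "y = (l, l)" "1 \<le> l" "l \<le> n"
    by auto
  then have "y = col_flip n (l, n + 1 - l)"
    by (auto simp: col_flip_def)
  then show "y \<in> col_flip n ` {(i, n + 1 - i) | i. 1 \<le> i \<and> i \<le> n}"
    using l by auto
qed

lemma Min_image_Suc_diff:
  assumes "S \<subseteq> {1..n}" "S \<noteq> {}"
  shows "Min ((\<lambda>j. Suc n - j) ` S) = Suc n - Max S"
proof (rule Min_eqI)
  have "finite S"
    using assms(1) finite_subset by blast
  then show "finite ((\<lambda>j. Suc n - j) ` S)"
    by simp
  show "Suc n - Max S \<in> (\<lambda>j. Suc n - j) ` S"
    using Max_in[OF \<open>finite S\<close> assms(2)] by blast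
  fix y assume "y \<in> (\<lambda>j. Suc n - j) ` S"
  then obtain j where "j \<in> S" "y = Suc n - j"
    by blast
  then show "Suc n - Max S \<le> y"
    using Max_ge[OF \<open>finite S\<close>] by (simp add: diff_le_mono2)
qed

locale square_support =
  fixes n :: nat and T :: "(nat \<times> nat) set"
  assumes T_square: "T \<subseteq> square n"
begin

abbreviation flipped :: "(nat \<times> nat) set" where
  "flipped \<equiv> col_flip n ` T"

abbreviation unique_parent :: bool where
  "unique_parent \<equiv>
     \<forall>(i, j)\<in>T. (i, j) \<noteq> (1, 1) \<longrightarrow> ((\<exists>i'<i. (i', j) \<in> T) \<noteq> (\<exists>j'<j. (i, j') \<in> T))"

lemma col_flip_eq_iff: "a \<in> T \<Longrightarrow> b \<in> T \<Longrightarrow> col_flip n a = col_flip n b \<longleftrightarrow> a = b"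
  using inj_on_col_flip[of n] T_square unfolding inj_on_def by blast

lemma rows_above_flipped:
  assumes "x \<in> T"
  shows "rows_above flipped (col_flip n x) = {i. i < fst x \<and> (i, snd x) \<in> T}"
proof (intro set_eqI iffI)
  fix i assume "i \<in> rows_above flipped (col_flip n x)"
  then obtain z where z: "z \<in> T" "col_flip n z = (i, Suc n - snd x)" "i < fst x"
    unfolding rows_above_def by (auto simp: col_flip_def)
  moreover have "snd z \<in> {1..n}" "snd x \<in> {1..n}"
    using z(1) assms T_square by auto
  ultimately have "z = (i, snd x)"
    by (cases z) (auto simp: col_flip_def)
  then show "i \<in> {i. i < fst x \<and> (i, snd x) \<in> T}"
    using z by simp
next
  fix i assume "i \<in> {i. i < fst x \<and> (i, snd x) \<in> T}"
  then show "i \<in> rows_above flipped (col_flip n x)"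
    using image_eqI[of _ "col_flip n" "(i, snd x)"] unfolding rows_above_def by (simp add: col_flip_def)
qed

lemma cols_right_flipped:
  assumes "x \<in> T"
  shows "cols_right flipped (col_flip n x) = (\<lambda>j. Suc n - j) ` {j. j < snd x \<and> (fst x, j) \<in> T}"
proof (intro set_eqI iffI)
  have x: "snd x \<in> {1..n}"
    using assms T_square by auto
  fix c assume "c \<in> cols_right flipped (col_flip n x)"
  then obtain z where z: "z \<in> T" "(fst x, c) = col_flip n z" "Suc n - snd x < c"
    unfolding cols_right_def by (auto simp: col_flip_def)
  moreover have "snd z \<in> {1..n}"
    using z(1) T_square by auto
  ultimately have "z = (fst x, snd z)" "c = Suc n - snd z" "snd z < snd x"
    using x by (auto simp: col_flip_def)
  then show "c \<in> (\<lambda>j. Suc n - j) ` {j. j < snd x \<and> (fst x, j) \<in> T}"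
    using z(1) by (metis (mono_tags, lifting) image_eqI mem_Collect_eq)
next
  fix c assume "c \<in> (\<lambda>j. Suc n - j) ` {j. j < snd x \<and> (fst x, j) \<in> T}"
  then obtain j where j: "c = Suc n - j" "j < snd x" "(fst x, j) \<in> T"
    by auto
  moreover have "j \<in> {1..n}" "snd x \<in> {1..n}"
    using j(3) assms T_square by auto
  moreover have "(fst x, c) \<in> flipped"
    using image_eqI[of _ "col_flip n" "(fst x, j)"] j by (simp add: col_flip_def)
  ultimately show "c \<in> cols_right flipped (col_flip n x)"
    unfolding cols_right_def by (auto simp: col_flip_def)
qed

lemma col_flip_cnm_parent:
  assumes "x \<in> T" "(\<exists>i<fst x. (i, snd x) \<in> T) \<or> (\<exists>j<snd x. (fst x, j) \<in> T)"
  shows "col_flip n (cnm_parent T x) = diagram_parent flipped (col_flip n x) \<and> cnm_parent T x \<in> T"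
proof (cases "\<exists>i<fst x. (i, snd x) \<in> T")
  case True
  define I where "I = {i. i < fst x \<and> (i, snd x) \<in> T}"
  have "finite I" "I \<noteq> {}"
    using True by (auto simp: I_def)
  then have "Max I \<in> I"
    by simp
  moreover have "cnm_parent T x = (Max I, snd x)"
    by (simp only: cnm_parent_def if_P[OF True] I_def)
  moreover have "diagram_parent flipped (col_flip n x) = (Max I, Suc n - snd x)"
    using \<open>I \<noteq> {}\<close> rows_above_flipped[OF assms(1)]
    by (simp add: diagram_parent_def I_def[symmetric]) (simp add: col_flip_def)
  ultimately show ?thesis
    by (auto simp: I_def col_flip_def)
next
  case False
  define J where "J = {j. j < snd x \<and> (fst x, j) \<in> T}"
  have J: "J \<subseteq> {1..n}" "J \<noteq> {}"
    using T_square False assms(2) by (auto simp: J_def)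
  then have "Max J \<in> J"
    using finite_subset[OF J(1)] by simp
  moreover have "cnm_parent T x = (fst x, Max J)"
    by (simp only: cnm_parent_def if_not_P[OF False] J_def)
  moreover have "diagram_parent flipped (col_flip n x) = (fst x, Suc n - Max J)"
    using False rows_above_flipped[OF assms(1)] cols_right_flipped[OF assms(1)] Min_image_Suc_diff[OF J]
    by (simp add: diagram_parent_def J_def[symmetric]) (simp add: col_flip_def)
  ultimately show ?thesis
    by (auto simp: J_def col_flip_def)
qed

lemma col_flip_eq_corner_iff:
  assumes "x \<in> T"
  shows "col_flip n x = (1, n) \<longleftrightarrow> x = (1, 1)"
proof -
  have "x \<in> square n"
    using assms T_square by blast
  then show ?thesis
    by (cases x) (auto simp: col_flip_def)
qed

lemma unique_parent_iff:
  "unique_parent \<longleftrightarrow>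
    (\<forall>x\<in>flipped. x \<noteq> (1, n) \<longrightarrow> (rows_above flipped x \<noteq> {}) \<noteq> (cols_right flipped x \<noteq> {}))"
proof -
  have rows_above_iff: "(\<exists>i<fst x. (i, snd x) \<in> T) \<longleftrightarrow> rows_above flipped (col_flip n x) \<noteq> {}"
    and right_iff: "(\<exists>j<snd x. (fst x, j) \<in> T) \<longleftrightarrow> cols_right flipped (col_flip n x) \<noteq> {}"
    if "x \<in> T" for x
    using rows_above_flipped[OF that] cols_right_flipped[OF that] by auto
  have "unique_parent \<longleftrightarrow>
      (\<forall>x\<in>T. x \<noteq> (1, 1) \<longrightarrow> (\<exists>i<fst x. (i, snd x) \<in> T) \<noteq> (\<exists>j<snd x. (fst x, j) \<in> T))"
    by (simp add: Ball_def split_paired_all)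
  also have "\<dots> \<longleftrightarrow> (\<forall>x\<in>T. col_flip n x \<noteq> (1, n) \<longrightarrow>
      (rows_above flipped (col_flip n x) \<noteq> {}) \<noteq> (cols_right flipped (col_flip n x) \<noteq> {}))"
    using rows_above_iff right_iff col_flip_eq_corner_iff by auto
  also have "\<dots> \<longleftrightarrow>
      (\<forall>x\<in>flipped. x \<noteq> (1, n) \<longrightarrow> (rows_above flipped x \<noteq> {}) \<noteq> (cols_right flipped x \<noteq> {}))"
    by auto
  finally show ?thesis .
qed

lemma diagram_children_flipped:
  assumes unique: "unique_parent" and "p \<in> T"
  shows "diagram_children (1, n) flipped (col_flip n p) = col_flip n ` cnm_children T p"
proof -
  have parent: "col_flip n (cnm_parent T q) = diagram_parent flipped (col_flip n q) \<and> cnm_parent T q \<in> T"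
    if "q \<in> T" "q \<noteq> (1, 1)" for q
  proof -
    have "(\<exists>i<fst q. (i, snd q) \<in> T) \<or> (\<exists>j<snd q. (fst q, j) \<in> T)"
      using bspec[OF unique that(1)] that(2) by (cases q) auto
    then show ?thesis
      using col_flip_cnm_parent[OF that(1)] by blast
  qed
  show ?thesis
  proof (intro set_eqI iffI)
    fix y assume "y \<in> diagram_children (1, n) flipped (col_flip n p)"
    then obtain q where q: "q \<in> T" "y = col_flip n q" "col_flip n q \<noteq> (1, n)"
        "diagram_parent flipped (col_flip n q) = col_flip n p"
      unfolding diagram_children_def by auto
    then have "q \<noteq> (1, 1)"
      using col_flip_eq_corner_iff by auto
    then have "col_flip n (cnm_parent T q) = col_flip n p" "cnm_parent T q \<in> T"
      using parent[OF q(1)] q(4) by auto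
    then have "cnm_parent T q = p"
      using col_flip_eq_iff assms(2) by blast
    then show "y \<in> col_flip n ` cnm_children T p"
      using q \<open>q \<noteq> (1, 1)\<close> unfolding cnm_children_def by auto
  next
    fix y assume "y \<in> col_flip n ` cnm_children T p"
    then obtain q where q: "q \<in> T" "y = col_flip n q" "q \<noteq> (1, 1)" "cnm_parent T q = p"
      unfolding cnm_children_def by auto
    moreover have "col_flip n q \<noteq> (1, n)"
      using col_flip_eq_corner_iff q(1,3) by blast
    ultimately show "y \<in> diagram_children (1, n) flipped (col_flip n p)"
      using parent[OF q(1,3)] unfolding diagram_children_def by auto
  qed
qed

lemma card_col_flip_image: "X \<subseteq> T \<Longrightarrow> card (col_flip n ` X) = card X"
  using card_image inj_on_col_flip T_square inj_on_subset by (metis subset_trans)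

lemma upper_diagonal_iff_diagonal_leaves:
  assumes unique: "unique_parent"
  shows "upper_diagonal n T \<longleftrightarrow>
    {y\<in>flipped. diagram_children (1, n) flipped y = {}} = {(l, l) | l. l \<in> {1..n}}"
proof -
  have leaves_flipped: "col_flip n ` cnm_leaves T = {y\<in>flipped. diagram_children (1, n) flipped y = {}}"
    using diagram_children_flipped[OF unique] unfolding cnm_leaves_def by auto
  have "cnm_leaves T \<subseteq> square n"
    using T_square unfolding cnm_leaves_def by blast
  moreover have "{(i, n + 1 - i) | i. 1 \<le> i \<and> i \<le> n} \<subseteq> square n"
    by auto
  ultimately have "cnm_leaves T = {(i, n + 1 - i) | i. 1 \<le> i \<and> i \<le> n} \<longleftrightarrow>
      col_flip n ` cnm_leaves T = col_flip n ` {(i, n + 1 - i) | i. 1 \<le> i \<and> i \<le> n}"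
    by (rule inj_on_image_eq_iff[OF inj_on_col_flip, symmetric])
  then show ?thesis
    unfolding upper_diagonal_def col_flip_anti_diagonal leaves_flipped .
qed

lemma upper_diagonal_covers:
  assumes "upper_diagonal n T"
  shows "\<forall>i\<in>{1..n}. \<exists>j. (i, j) \<in> T" "\<forall>j\<in>{1..n}. \<exists>i. (i, j) \<in> T"
proof -
  have "{(i, n + 1 - i) | i. 1 \<le> i \<and> i \<le> n} \<subseteq> T"
    using assms unfolding upper_diagonal_def cnm_leaves_def by blast
  moreover have "(i, n + 1 - i) \<in> {(i, n + 1 - i) | i. 1 \<le> i \<and> i \<le> n}" if "i \<in> {1..n}" for i
    using that by auto
  ultimately have anti_diagonal: "(i, n + 1 - i) \<in> T" if "i \<in> {1..n}" for i
    using that by blast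
  then show "\<forall>i\<in>{1..n}. \<exists>j. (i, j) \<in> T"
    by blast
  show "\<forall>j\<in>{1..n}. \<exists>i. (i, j) \<in> T"
  proof
    fix j assume j: "j \<in> {1..n}"
    then have "n + 1 - (n + 1 - j) = j" "n + 1 - j \<in> {1..n}"
      by auto
    then have "(n + 1 - j, j) \<in> T"
      using anti_diagonal[of "n + 1 - j"] by simp
    then show "\<exists>i. (i, j) \<in> T" ..
  qed
qed

lemma corner_in_flipped_iff: "(1, 1) \<in> T \<longleftrightarrow> (1, n) \<in> flipped"
proof
  assume "(1, 1) \<in> T"
  moreover have "col_flip n (1, 1) = (1, n)"
    by (simp add: col_flip_def)
  ultimately show "(1, n) \<in> flipped"
    by (metis image_eqI)
next
  assume "(1, n) \<in> flipped"
  then obtain z where "z \<in> T" "col_flip n z = (1, n)"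
    by auto
  then show "(1, 1) \<in> T"
    using col_flip_eq_corner_iff by auto
qed

lemma card_children_flipped_iff:
  assumes unique: "unique_parent"
  shows "(\<forall>p\<in>T. card (cnm_children T p) = 0 \<or> card (cnm_children T p) = 2) \<longleftrightarrow>
    (\<forall>y\<in>flipped. card (diagram_children (1, n) flipped y) = 0 \<or>
      card (diagram_children (1, n) flipped y) = 2)"
proof -
  have "card (diagram_children (1, n) flipped (col_flip n p)) = card (cnm_children T p)" if "p \<in> T" for p
    using diagram_children_flipped[OF unique that] card_col_flip_image[of "cnm_children T p"]
    unfolding cnm_children_def by auto
  then show ?thesis
    by auto
qed

lemma tree_diagram_flipped_if_CNM:
  assumes "1 \<le> n" and cnm: "is_CNM n T" "upper_diagonal n T"
  shows "tree_diagram {1..n} flipped"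
proof -
  have Min_Max: "Min {1..n} = 1" "Max {1..n} = n"
    using assms by (auto intro!: Min_eqI Max_eqI)
  have unique: "unique_parent" and "(1, 1) \<in> T"
    and cards: "\<forall>p\<in>T. card (cnm_children T p) = 0 \<or> card (cnm_children T p) = 2"
    using cnm(1) unfolding is_CNM_def by blast+
  show ?thesis
    unfolding tree_diagram_def Min_Max
  proof (intro conjI)
    show "finite {1..n}" "{1..n} \<noteq> {}"
      using assms by simp_all
    show "flipped \<subseteq> {1..n} \<times> {1..n}"
      using col_flip_image_subset[OF T_square] .
    show "(1, n) \<in> flipped"
      using corner_in_flipped_iff \<open>(1, 1) \<in> T\<close> by blast
    show "\<forall>x\<in>flipped. x \<noteq> (1, n) \<longrightarrow> (rows_above flipped x \<noteq> {}) \<noteq> (cols_right flipped x \<noteq> {})"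
      using unique unique_parent_iff by blast
    show "\<forall>p\<in>flipped. card (diagram_children (1, n) flipped p) = 0 \<or>
        card (diagram_children (1, n) flipped p) = 2"
      using card_children_flipped_iff[OF unique] cards by (rule iffD1)
    show "{p \<in> flipped. diagram_children (1, n) flipped p = {}} = {(l, l) | l. l \<in> {1..n}}"
      using upper_diagonal_iff_diagonal_leaves[OF unique] cnm(2) by (rule iffD1)
  qed
qed

lemma CNM_if_tree_diagram_flipped:
  assumes "1 \<le> n" "tree_diagram {1..n} flipped"
  shows "is_CNM n T" "upper_diagonal n T"
proof -
  have Min_Max: "Min {1..n} = 1" "Max {1..n} = n"
    using assms by (auto intro!: Min_eqI Max_eqI)
  have corner_in: "(1, n) \<in> flipped"
    and xor: "\<forall>x\<in>flipped. x \<noteq> (1, n) \<longrightarrow> (rows_above flipped x \<noteq> {}) \<noteq> (cols_right flipped x \<noteq> {})"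
    and cards: "\<forall>p\<in>flipped. card (diagram_children (1, n) flipped p) = 0 \<or>
        card (diagram_children (1, n) flipped p) = 2"
    and leaves: "{p \<in> flipped. diagram_children (1, n) flipped p = {}} = {(l, l) | l. l \<in> {1..n}}"
    using assms(2) unfolding tree_diagram_def Min_Max by simp_all
  have unique: "unique_parent"
    using unique_parent_iff xor by (rule iffD2)
  show upper: "upper_diagonal n T"
    using upper_diagonal_iff_diagonal_leaves[OF unique] leaves by (rule iffD2)
  show "is_CNM n T"
    unfolding is_CNM_def
  proof (intro conjI)
    show "T \<subseteq> {1..n} \<times> {1..n}"
      using T_square .
    show "(1, 1) \<in> T"
      using corner_in_flipped_iff corner_in by (rule iffD2)
    show "\<forall>p\<in>T. card (cnm_children T p) = 0 \<or> card (cnm_children T p) = 2"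
      using card_children_flipped_iff[OF unique] cards by (rule iffD2)
    show "unique_parent"
      using unique .
  qed (use upper_diagonal_covers[OF upper] in blast)+
qed

end

lemma upper_diagonal_CNM_iff_tree:
  assumes "1 \<le> n"
  shows "is_CNM n T \<and> upper_diagonal n T \<longleftrightarrow> (\<exists>t\<in>trees_on {1..n}. T = col_flip n ` spans t)"
proof
  assume cnm: "is_CNM n T \<and> upper_diagonal n T"
  then have T_square: "T \<subseteq> square n"
    unfolding is_CNM_def by blast
  then have "tree_diagram {1..n} (col_flip n ` T)"
    using square_support.tree_diagram_flipped_if_CNM[OF square_support.intro assms] cnm
    by blast
  then obtain t where "t \<in> trees_on {1..n}" "spans t = col_flip n ` T"
    unfolding tree_diagram_iff trees_on_def by blast
  then show "\<exists>t\<in>trees_on {1..n}. T = col_flip n ` spans t"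
    using col_flip_image_image[OF T_square] by metis
next
  assume "\<exists>t\<in>trees_on {1..n}. T = col_flip n ` spans t"
  then obtain t where t: "wf_tree t" "leaves t = {1..n}" "T = col_flip n ` spans t"
    unfolding trees_on_def by blast
  then have spans_square: "spans t \<subseteq> square n"
    using spans_subset_leaves by blast
  then have "T \<subseteq> square n"
    using t(3) col_flip_image_subset by blast
  moreover have "tree_diagram {1..n} (col_flip n ` T)"
    using tree_diagram_spans[OF t(1)] t col_flip_image_image[OF spans_square] by simp
  ultimately show "is_CNM n T \<and> upper_diagonal n T"
    using square_support.CNM_if_tree_diagram_flipped[OF square_support.intro assms] by blast
qed

lemma anti_diagonal_in_tree_iff_cherry:
  assumes "t \<in> trees_on {1..n}" "1 \<le> i" "i < n"
  shows "(i, n - i) \<in> col_flip n ` spans t \<longleftrightarrow> has_cherry i t"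
proof -
  have spans_square: "spans t \<subseteq> square n"
    using assms(1) spans_subset_leaves[of t] unfolding trees_on_def by blast
  have "(i, n - i) \<in> col_flip n ` spans t \<longleftrightarrow> (i, Suc i) \<in> col_flip n ` col_flip n ` spans t"
    using anti_diagonal_iff_cherry[OF col_flip_image_subset[OF spans_square] assms(2,3)] .
  also have "\<dots> \<longleftrightarrow> (i, Suc i) \<in> spans t"
    by (simp only: col_flip_image_image[OF spans_square])
  also have "\<dots> \<longleftrightarrow> has_cherry i t"
    using assms(1) span_Suc_iff_has_cherry unfolding trees_on_def by blast
  finally show ?thesis .
qed

lemma inj_on_col_flip_spans: "inj_on (\<lambda>t. col_flip n ` spans t) (trees_on {1..n})"
proof (rule inj_onI)
  fix t u assume "t \<in> trees_on {1..n}" "u \<in> trees_on {1..n}" "col_flip n ` spans t = col_flip n ` spans u"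
  moreover from this have "spans t \<subseteq> square n" "spans u \<subseteq> square n"
    using spans_subset_leaves unfolding trees_on_def by blast+
  ultimately show "t = u"
    using wf_tree_spans_inj inj_on_image_eq_iff[OF inj_on_col_flip] unfolding trees_on_def by auto
qed

lemma trees_first_cherry_iff_anti_diagonal:
  assumes "2 \<le> n" "k \<le> n - 2"
  shows "t \<in> trees_first_cherry {1..n} k \<longleftrightarrow>
    t \<in> trees_on {1..n} \<and> (\<forall>i\<in>{1..k}. (i, n - i) \<notin> col_flip n ` spans t) \<and>
    (k + 1, n - k - 1) \<in> col_flip n ` spans t"
proof (cases "t \<in> trees_on {1..n}")
  case True
  have cherry: "(i, n - i) \<in> col_flip n ` spans t \<longleftrightarrow> has_cherry i t" if "i \<in> {1..Suc k}" for i
  proof -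
    have "1 \<le> i" "i < n"
      using that assms by auto
    then show ?thesis
      by (rule anti_diagonal_in_tree_iff_cherry[OF True])
  qed
  have "(\<forall>i\<in>{1..k}. (i, n - i) \<notin> col_flip n ` spans t) \<longleftrightarrow> (\<forall>i\<in>{1..k}. \<not> has_cherry i t)"
    using cherry by simp
  moreover have "(k + 1, n - k - 1) \<in> col_flip n ` spans t \<longleftrightarrow> has_cherry (Suc k) t"
    using cherry[of "Suc k"] by simp
  ultimately show ?thesis
    using True by (simp add: trees_first_cherry_def trees_avoiding_def)
qed (simp add: trees_first_cherry_def trees_avoiding_def)

lemma f_cnm_set_eq_image:
  assumes "2 \<le> n" "k \<le> n - 2"
  shows "{T. is_CNM n T \<and> upper_diagonal n T \<and> (\<forall>i\<in>{1..k}. (i, n - i) \<notin> T) \<and> (k + 1, n - k - 1) \<in> T}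
    = (\<lambda>t. col_flip n ` spans t) ` trees_first_cherry {1..n} k"
proof (intro set_eqI iffI)
  fix T assume "T \<in> {T. is_CNM n T \<and> upper_diagonal n T \<and> (\<forall>i\<in>{1..k}. (i, n - i) \<notin> T) \<and>
      (k + 1, n - k - 1) \<in> T}"
  then have T: "is_CNM n T \<and> upper_diagonal n T" "\<forall>i\<in>{1..k}. (i, n - i) \<notin> T"
      "(k + 1, n - k - 1) \<in> T"
    by auto
  then obtain t where t: "t \<in> trees_on {1..n}" "T = col_flip n ` spans t"
    using upper_diagonal_CNM_iff_tree[of n T] assms(1) by auto
  then have "t \<in> trees_first_cherry {1..n} k"
    using T(2,3) trees_first_cherry_iff_anti_diagonal[OF assms] by simp
  then show "T \<in> (\<lambda>t. col_flip n ` spans t) ` trees_first_cherry {1..n} k"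
    using t(2) by blast
next
  fix T assume "T \<in> (\<lambda>t. col_flip n ` spans t) ` trees_first_cherry {1..n} k"
  then obtain t where t: "t \<in> trees_first_cherry {1..n} k" "T = col_flip n ` spans t"
    by blast
  then have "is_CNM n T \<and> upper_diagonal n T"
    using upper_diagonal_CNM_iff_tree[of n T] assms(1) trees_first_cherry_iff_anti_diagonal[OF assms]
    by auto
  then show "T \<in> {T. is_CNM n T \<and> upper_diagonal n T \<and> (\<forall>i\<in>{1..k}. (i, n - i) \<notin> T) \<and>
      (k + 1, n - k - 1) \<in> T}"
    using t trees_first_cherry_iff_anti_diagonal[OF assms] by simp
qed

lemma f_cnm_eq_card_trees_first_cherry:
  assumes "2 \<le> n" "k \<le> n - 2"
  shows "f_cnm n k = card (trees_first_cherry {1..n} k)"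
proof -
  have "trees_first_cherry {1..n} k \<subseteq> trees_on {1..n}"
    by (auto simp: trees_first_cherry_def trees_avoiding_def)
  then show ?thesis
    unfolding f_cnm_def f_cnm_set_eq_image[OF assms]
    using card_image inj_on_subset[OF inj_on_col_flip_spans] by metis
qed

theorem theorem4p10:
  fixes n k :: nat
  assumes "n \<ge> 2" and "k \<le> n - 2"
  shows "int (f_cnm n k) =
    (\<Sum>j=0..k. int ((k - j) choose j) * (-1) ^ j * int (fact (n - 2 - j)))"
proof -
  have "int (f_cnm n k) = int (card (trees_first_cherry {1..n} k))"
    using f_cnm_eq_card_trees_first_cherry[OF assms] by simp
  also have "\<dots> = alt_fact_sum n k"
    using card_trees_first_cherry[of "{1..n}" k] assms by simp
  finally show ?thesis
    unfolding alt_fact_sum_def .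
qed

end
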